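(* Let $\mathbb{X},\mathbb{Y}$ be Banach spaces, $g:\mathbb{X}\to\mathbb{Y}$ continuously differentiable and $f:\mathbb{Y}\to\mathbb{R}$ convex and continuous. Let $S_f:=\{y:f(y)\le0\}$, $\mathcal{S}:=\{x:f(g(x))\le0\}$, and let $\bar x\in\mathcal{S}$ be such that $g$ is metrically regular around $\bar x$. Then the inequality $(f\circ g)(x)\le0$ has a local error bound at $\bar x$ if and only if $$\limsup_{x\xrightarrow{{\rm bd}(\mathcal{S})}\bar x}\mathbf{e}\Big(\{h\in\mathbb{X}:\mathbf{d}^+f(g(x),\nabla g(x)(h))\le1\},\ \nabla g(x)^{-1}\big(\mathbf{T}^{\mathbf B}(S_f,g(x))\big)\Big)<+\infty,$$ and moreover $\tau(\mathcal{S},\bar x)$ equals this $\limsup$.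
   Context: $\mathbf{B}(a,\delta)$ is the open ball with center $a$ and radius $\delta$; ${\rm bd}$ denotes boundary; $\mathbf{d}(x,D):=\inf\{\|x-y\|:y\in D\}$. Excess: $\mathbf{e}(C,D):=\sup_{x\in C}\mathbf{d}(x,D)$, with $\mathbf{e}(\emptyset,D)=0$ if $D\ne\emptyset$ and $=\infty$ otherwise. For convex $f$, $\mathbf{d}^+f(y,v):=\lim_{t\to0^+}\frac{f(y+tv)-f(y)}{t}$. Bouligand tangent cone $\mathbf{T}^{\mathbf B}(C,c)$: all $v$ with $v_n\to v$, $t_n\downarrow0$, $c+t_nv_n\in C$. "Continuously differentiable" means Fréchet differentiable with $x\mapsto\nabla g(x)$ continuous in operator norm. $g$ is metrically regular around $\bar x$ if there exist $\kappa>0$ and neighborhoods $U$ of $\bar x$, $V$ of $g(\bar x)$ with $\mathbf{d}(x,g^{-1}(y))\le\kappa\|g(x)-y\|$ for all $(x,y)\in U\times V$. Local error bound at $\bar x$: there exist $\tau,\delta>0$ with $\mathbf{d}(x,\mathcal{S})\le\tau\max\{f(g(x)),0\}$ for all $x\in\mathbf{B}(\bar x,\delta)$; $\tau(\mathcal{S},\bar x)$ is the infimum of all such $\tau$ (with $\inf\emptyset=+\infty$). $\limsup_{x\xrightarrow{D}\bar x}F(x):=\lim_{\delta\downarrow0}\sup\{F(x):x\in D\cap\mathbf{B}(\bar x,\delta)\}$, with the convention $\sup\emptyset=0$. *)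

theory Defs
  imports "HOL-Analysis.Analysis"
begin

definition setdist_e :: "'a::real_normed_vector \<Rightarrow> 'a set \<Rightarrow> ereal" where
  "setdist_e x D = (if D = {} then \<infinity> else ereal (infdist x D))"

definition excess :: "'a::real_normed_vector set \<Rightarrow> 'a set \<Rightarrow> ereal" where
  "excess C D = (if C = {} then (if D = {} then \<infinity> else 0)
                 else (SUP x\<in>C. setdist_e x D))"

definition dir_deriv :: "('a::real_normed_vector \<Rightarrow> real) \<Rightarrow> 'a \<Rightarrow> 'a \<Rightarrow> real" where
  "dir_deriv f y v = Lim (at_right 0) (\<lambda>t. (f (y + t *\<^sub>R v) - f y) / t)"

definition bouligand_cone :: "'a::real_normed_vector set \<Rightarrow> 'a \<Rightarrow> 'a set" where
  "bouligand_cone C c = {v. \<exists>vs ts. vs \<longlonglongrightarrow> v \<and> ts \<longlonglongrightarrow> 0 \<and> (\<forall>n. ts n > 0)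
                                   \<and> (\<forall>n. c + ts n *\<^sub>R vs n \<in> C)}"

definition metrically_regular :: "('a::real_normed_vector \<Rightarrow> 'b::real_normed_vector) \<Rightarrow> 'a \<Rightarrow> bool" where
  "metrically_regular g xbar = (\<exists>\<kappa>>0. \<exists>U V. open U \<and> xbar \<in> U \<and> open V \<and> g xbar \<in> V \<and>
      (\<forall>x\<in>U. \<forall>y\<in>V. setdist_e x (g -` {y}) \<le> ereal (\<kappa> * norm (g x - y))))"

definition local_error_bound :: "('a::real_normed_vector \<Rightarrow> real) \<Rightarrow> 'a \<Rightarrow> bool" where
  "local_error_bound \<phi> xbar = (\<exists>\<tau>>0. \<exists>\<delta>>0. \<forall>x\<in>ball xbar \<delta>.
      setdist_e x {z. \<phi> z \<le> 0} \<le> ereal (\<tau> * max (\<phi> x) 0))"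

text \<open>Error bound modulus tau(S,xbar): infimum of admissible tau (Inf {} = +infinity).\<close>
definition error_bound_modulus :: "('a::real_normed_vector \<Rightarrow> real) \<Rightarrow> 'a \<Rightarrow> ereal" where
  "error_bound_modulus \<phi> xbar = Inf {ereal \<tau> | \<tau>. \<tau> > 0 \<and> (\<exists>\<delta>>0. \<forall>x\<in>ball xbar \<delta>.
      setdist_e x {z. \<phi> z \<le> 0} \<le> ereal (\<tau> * max (\<phi> x) 0))}"

text \<open>limsup of F as x tends to xbar within D: lim_{delta -> 0+} sup {F x | x in D \<inter> B(xbar,delta)},
  with sup {} = 0.  Since the inner sup is monotone in delta, the limit is the infimum over delta > 0.\<close>
definition limsup_within :: "'a::metric_space set \<Rightarrow> 'a \<Rightarrow> ('a \<Rightarrow> ereal) \<Rightarrow> ereal" where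
  "limsup_within D xbar F = (INF \<delta>\<in>{0<..}.
      (if D \<inter> ball xbar \<delta> = {} then 0 else (SUP x\<in>D \<inter> ball xbar \<delta>. F x)))"

end

theory Submission
  imports Defs
begin

text \<open>
  If the error bound holds with constant \<tau>, let b be a boundary point and h a direction with
  dir_deriv f (g b) (g' b h) \<le> 1. Along b + t h the value of f \<circ> g is at most t (1 + o(1)), so
  there are feasible points s within \<tau> t (1 + o(1)) of b + t h. The quotients (s - b) / t satisfy
  the linearised tangency condition up to o(1), and the open mapping property of g' b, a consequence
  of metric regularity, corrects them into the linearised tangent cone; hence h is within \<tau> of it.

  Conversely, let the excess stay below \<tau>' < \<tau> near xbar, and let x be infeasible and close to
  xbar. Ekeland's principle for the distance to x on the feasible set gives a nearly nearest
  feasible point b, necessarily on the boundary, and Ekeland's inequality extends from feasible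
  points to the tangent cone of the feasible set at b. Metric regularity makes this cone contain the
  linearised tangent cone. The direction x - b rescaled by f (g x) is admissible, hence \<tau>'-close
  to the linearised cone, and Ekeland's inequality turns this into |x - b| < \<tau> f (g x).
\<close>

section \<open>Error bounds, distances and excess\<close>

definition metrically_regular_on :: "('a::real_normed_vector \<Rightarrow> 'b::real_normed_vector) \<Rightarrow> real \<Rightarrow> 'a set \<Rightarrow> 'b set \<Rightarrow> bool"
  where "metrically_regular_on g \<kappa> U V \<longleftrightarrow>
    (\<forall>x\<in>U. \<forall>y\<in>V. setdist_e x (g -` {y}) \<le> ereal (\<kappa> * norm (g x - y)))"

definition error_bound_with :: "('a::real_normed_vector \<Rightarrow> real) \<Rightarrow> 'a \<Rightarrow> real \<Rightarrow> bool"
  where "error_bound_with \<phi> xbar \<tau> \<longleftrightarrow> \<tau> > 0 \<and>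
    (\<exists>\<delta>>0. \<forall>x\<in>ball xbar \<delta>. setdist_e x {z. \<phi> z \<le> 0} \<le> ereal (\<tau> * max (\<phi> x) 0))"

lemma metrically_regular_iff:
  "metrically_regular g xbar \<longleftrightarrow>
    (\<exists>\<kappa>>0. \<exists>U V. open U \<and> xbar \<in> U \<and> open V \<and> g xbar \<in> V \<and> metrically_regular_on g \<kappa> U V)"
  by (simp add: metrically_regular_def metrically_regular_on_def)

lemma local_error_bound_iff_error_bound_with:
  "local_error_bound \<phi> xbar \<longleftrightarrow> (\<exists>\<tau>. error_bound_with \<phi> xbar \<tau>)"
  by (auto simp: local_error_bound_def error_bound_with_def)

lemma error_bound_modulus_eq_Inf_error_bound_with:
  "error_bound_modulus \<phi> xbar = Inf {ereal \<tau> | \<tau>. error_bound_with \<phi> xbar \<tau>}"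
  by (simp add: error_bound_modulus_def error_bound_with_def)

lemma setdist_e_eq_infdist [simp]: "D \<noteq> {} \<Longrightarrow> setdist_e x D = ereal (infdist x D)"
  by (simp add: setdist_e_def)

lemma ex_dist_less_infdist_add:
  assumes "A \<noteq> {}" "e > 0"
  shows "\<exists>a\<in>A. dist x a < infdist x A + e"
proof -
  have "Inf (dist x ` A) < infdist x A + e"
    using assms by (simp add: infdist_notempty)
  then show ?thesis
    using assms by (subst (asm) cInf_less_iff) (auto intro: bdd_belowI[where m=0])
qed

lemma excess_nonneg: "excess C D \<ge> 0"
  by (auto simp: excess_def setdist_e_def infdist_nonneg intro: SUP_upper2)

lemma excess_le:
  assumes "C \<noteq> {}" "D \<noteq> {}" "\<And>h. h \<in> C \<Longrightarrow> infdist h D \<le> c"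
  shows "excess C D \<le> ereal c"
  using assms by (auto simp: excess_def intro!: SUP_least)

lemma infdist_le_excess:
  assumes "h \<in> C" "D \<noteq> {}"
  shows "ereal (infdist h D) \<le> excess C D"
  using assms by (auto simp: excess_def intro: SUP_upper2)

lemma limsup_within_nonneg:
  assumes "\<And>x. F x \<ge> 0"
  shows "limsup_within D xbar F \<ge> 0"
  unfolding limsup_within_def
proof (intro INF_greatest)
  fix \<delta> :: real
  show "0 \<le> (if D \<inter> ball xbar \<delta> = {} then 0 else (SUP x\<in>D \<inter> ball xbar \<delta>. F x))"
    using assms by (auto intro: SUP_upper2)
qed

lemma limsup_within_le:
  assumes "\<delta> > 0" "c \<ge> 0" "\<And>x. x \<in> D \<inter> ball xbar \<delta> \<Longrightarrow> F x \<le> c"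
  shows "limsup_within D xbar F \<le> c"
proof -
  have "(if D \<inter> ball xbar \<delta> = {} then 0 else (SUP x\<in>D \<inter> ball xbar \<delta>. F x)) \<le> c"
    using assms by (auto intro!: SUP_least)
  then show ?thesis
    unfolding limsup_within_def using assms(1) by (meson INF_lower greaterThan_iff order_trans)
qed

lemma limsup_within_less_imp_eventually_less:
  assumes "limsup_within D xbar F < c"
  shows "\<exists>\<delta>>0. \<forall>x\<in>D \<inter> ball xbar \<delta>. F x < c"
proof -
  obtain \<delta> where "\<delta> > 0"
    and less: "(if D \<inter> ball xbar \<delta> = {} then 0 else (SUP x\<in>D \<inter> ball xbar \<delta>. F x)) < c"
    using assms unfolding limsup_within_def INF_less_iff by auto
  have "F x < c" if x: "x \<in> D \<inter> ball xbar \<delta>" for x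
  proof -
    have "(SUP x\<in>D \<inter> ball xbar \<delta>. F x) < c"
      using less x by (auto split: if_splits)
    then show ?thesis using x by (meson SUP_upper order.strict_trans1)
  qed
  then show ?thesis using \<open>\<delta> > 0\<close> by blast
qed

lemma Inf_admissible_eq:
  fixes \<Lambda> :: ereal
  assumes upper: "\<And>\<tau>. P \<tau> \<Longrightarrow> \<Lambda> \<le> ereal \<tau>"
    and lower: "\<And>\<tau>. \<Lambda> < ereal \<tau> \<Longrightarrow> P \<tau>"
  shows "(\<exists>\<tau>. P \<tau>) \<longleftrightarrow> \<Lambda> < \<infinity>" and "Inf {ereal \<tau> | \<tau>. P \<tau>} = \<Lambda>"
proof -
  show "(\<exists>\<tau>. P \<tau>) \<longleftrightarrow> \<Lambda> < \<infinity>"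
  proof
    assume "\<exists>\<tau>. P \<tau>"
    then obtain \<tau> where "\<Lambda> \<le> ereal \<tau>" using upper by blast
    then show "\<Lambda> < \<infinity>" by (metis less_ereal.simps(4) order.strict_trans1)
  next
    assume "\<Lambda> < \<infinity>"
    then obtain \<tau> where "\<Lambda> < ereal \<tau>" by (cases \<Lambda>) (auto intro: less_add_one)
    then show "\<exists>\<tau>. P \<tau>" using lower by blast
  qed
  show "Inf {ereal \<tau> | \<tau>. P \<tau>} = \<Lambda>"
  proof (rule antisym)
    show "Inf {ereal \<tau> | \<tau>. P \<tau>} \<le> \<Lambda>"
    proof (rule dense_ge)
      fix z assume "\<Lambda> < z"
      then show "Inf {ereal \<tau> | \<tau>. P \<tau>} \<le> z"
        using lower by (cases z) (auto intro: Inf_lower)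
    qed
    show "\<Lambda> \<le> Inf {ereal \<tau> | \<tau>. P \<tau>}"
      using upper by (auto intro!: Inf_greatest)
  qed
qed

section \<open>Convex functions and directional derivatives\<close>

lemma convex_sublevel:
  assumes "convex_on UNIV f"
  shows "convex {y. f y \<le> c}"
proof (rule convexI)
  fix x y and u v :: real
  assume "x \<in> {y. f y \<le> c}" "y \<in> {y. f y \<le> c}" "0 \<le> u" "0 \<le> v" "u + v = 1"
  have "f (u *\<^sub>R x + v *\<^sub>R y) \<le> u * f x + v * f y"
  proof -
    have "u = 1 - v" using \<open>u + v = 1\<close> by simp
    then show ?thesis
      using convex_onD[OF assms, of v x y] \<open>0 \<le> u\<close> \<open>0 \<le> v\<close> by simp
  qed
  also have "\<dots> \<le> u * c + v * c"
    using \<open>x \<in> _\<close> \<open>y \<in> _\<close> \<open>0 \<le> u\<close> \<open>0 \<le> v\<close> by (intro add_mono mult_left_mono) auto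
  finally show "u *\<^sub>R x + v *\<^sub>R y \<in> {y. f y \<le> c}"
    using \<open>u + v = 1\<close> by (simp add: distrib_right[symmetric])
qed

lemma convex_on_diff_quotient_mono:
  fixes f :: "'a::real_normed_vector \<Rightarrow> real"
  assumes "convex_on UNIV f" and "0 < s" "s \<le> t"
  shows "(f (y + s *\<^sub>R v) - f y) / s \<le> (f (y + t *\<^sub>R v) - f y) / t"
proof -
  define \<theta> where "\<theta> = s / t"
  have \<theta>: "0 \<le> \<theta>" "\<theta> \<le> 1" "\<theta> * t = s"
    using assms by (auto simp: \<theta>_def)
  have "(1 - \<theta>) *\<^sub>R y + \<theta> *\<^sub>R (y + t *\<^sub>R v) = y + (\<theta> * t) *\<^sub>R v"
    by (simp add: algebra_simps)
  then have "f (y + s *\<^sub>R v) \<le> (1 - \<theta>) * f y + \<theta> * f (y + t *\<^sub>R v)"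
    using convex_onD[OF assms(1) \<theta>(1,2), of y "y + t *\<^sub>R v"] \<theta>(3) by simp
  then have "f (y + s *\<^sub>R v) - f y \<le> \<theta> * (f (y + t *\<^sub>R v) - f y)"
    by (simp add: algebra_simps)
  then show ?thesis
    using assms(2,3) by (simp add: \<theta>_def field_simps)
qed

lemma convex_on_diff_quotient_lower_bound:
  fixes f :: "'a::real_normed_vector \<Rightarrow> real"
  assumes "convex_on UNIV f" and "0 < t"
  shows "f y - f (y - v) \<le> (f (y + t *\<^sub>R v) - f y) / t"
proof -
  define \<theta> where "\<theta> = t / (1 + t)"
  have \<theta>: "0 \<le> \<theta>" "\<theta> \<le> 1"
    using assms(2) by (auto simp: \<theta>_def)
  have "y = (1 - \<theta>) *\<^sub>R (y + t *\<^sub>R v) + \<theta> *\<^sub>R (y - v)"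
    using assms(2) by (simp add: \<theta>_def field_simps flip: scaleR_add_left)
  then have "f y \<le> (1 - \<theta>) * f (y + t *\<^sub>R v) + \<theta> * f (y - v)"
    using convex_onD[OF assms(1) \<theta>, of "y + t *\<^sub>R v" "y - v"] by simp
  also have "\<dots> = (f (y + t *\<^sub>R v) + t * f (y - v)) / (1 + t)"
  proof -
    have "1 - \<theta> = 1 / (1 + t)"
      using assms(2) by (simp add: \<theta>_def field_simps)
    then show ?thesis by (simp add: \<theta>_def add_divide_distrib)
  qed
  finally have "t * (f y - f (y - v)) \<le> f (y + t *\<^sub>R v) - f y"
    using assms(2) by (simp add: pos_le_divide_eq algebra_simps)
  then show ?thesis
    using assms(2) by (simp add: pos_le_divide_eq mult.commute)
qed

lemma dir_deriv_zero [simp]: "dir_deriv f y 0 = 0"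
  unfolding dir_deriv_def by (simp add: tendsto_Lim)

text \<open>The difference quotients are monotone in the step, so they converge to their infimum as
  the step tends to 0.\<close>
lemma dir_deriv_convex:
  fixes f :: "'a::real_normed_vector \<Rightarrow> real"
  assumes "convex_on UNIV f"
  shows dir_deriv_tendsto: "((\<lambda>t. (f (y + t *\<^sub>R v) - f y) / t) \<longlongrightarrow> dir_deriv f y v) (at_right 0)"
    and dir_deriv_le_diff_quotient: "t > 0 \<Longrightarrow> dir_deriv f y v \<le> (f (y + t *\<^sub>R v) - f y) / t"
proof -
  define q where "q t = (f (y + t *\<^sub>R v) - f y) / t" for t
  have bdd: "bdd_below (q ` {0<..})"
    using convex_on_diff_quotient_lower_bound[OF assms]
    by (auto simp: q_def intro!: bdd_belowI[where m="f y - f (y - v)"])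
  have lim: "(q \<longlongrightarrow> Inf (q ` {0<..})) (at_right 0)"
  proof (rule order_tendstoI)
    fix a assume "a < Inf (q ` {0<..})"
    then show "eventually (\<lambda>t. a < q t) (at_right 0)"
      using bdd eventually_at_right_less[of "0::real"]
      by (auto elim!: eventually_mono intro: less_le_trans cInf_lower)
  next
    fix a assume "Inf (q ` {0<..}) < a"
    then obtain t0 where "t0 > 0" "q t0 < a"
      using bdd by (subst (asm) cInf_less_iff) auto
    have "q t < a" if "t \<in> {0<..<t0}" for t
    proof -
      have "q t \<le> q t0"
        unfolding q_def using that by (intro convex_on_diff_quotient_mono[OF assms]) auto
      then show ?thesis using \<open>q t0 < a\<close> by linarith
    qed
    then show "eventually (\<lambda>t. q t < a) (at_right 0)"
      using eventually_at_right_real[OF \<open>t0 > 0\<close>] by (auto elim!: eventually_mono)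
  qed
  then have "dir_deriv f y v = Inf (q ` {0<..})"
    unfolding dir_deriv_def q_def[symmetric] by (intro tendsto_Lim) auto
  with lim bdd show "(q \<longlongrightarrow> dir_deriv f y v) (at_right 0)"
    and "t > 0 \<Longrightarrow> dir_deriv f y v \<le> q t"
    by (auto intro: cInf_lower)
qed

lemma dir_deriv_scaleR:
  fixes f :: "'a::real_normed_vector \<Rightarrow> real"
  assumes "convex_on UNIV f" and "c > 0"
  shows "dir_deriv f y (c *\<^sub>R v) = c * dir_deriv f y v"
proof -
  have "filterlim (\<lambda>t. c * t) (at_right 0) (at_right (0::real))"
    unfolding filterlim_at
  proof
    show "\<forall>\<^sub>F t in at_right 0. c * t \<in> {0<..} \<and> c * t \<noteq> 0"
      using eventually_at_right_less[of "0::real"] assms(2) by (auto elim!: eventually_mono)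
    show "((\<lambda>t. c * t) \<longlongrightarrow> 0) (at_right 0)"
      using tendsto_mult_right[OF tendsto_ident_at, of c 0 "{0<..}"] by (simp add: mult.commute)
  qed
  from filterlim_compose[OF dir_deriv_tendsto[OF assms(1), of y v] this]
  have "((\<lambda>t. c * ((f (y + (c * t) *\<^sub>R v) - f y) / (c * t))) \<longlongrightarrow> c * dir_deriv f y v) (at_right 0)"
    by (intro tendsto_intros)
  moreover have "c * ((f (y + (c * t) *\<^sub>R v) - f y) / (c * t)) = (f (y + t *\<^sub>R (c *\<^sub>R v)) - f y) / t" for t
    using assms(2) by (cases "t = 0") (auto simp: field_simps)
  ultimately show ?thesis
    using dir_deriv_tendsto[OF assms(1), of y "c *\<^sub>R v"] by (intro tendsto_unique[symmetric]) auto
qed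

text \<open>Continuity bounds f near y0, and monotonicity of the difference quotients turns this bound
  into a Lipschitz constant.\<close>
lemma convex_on_locally_lipschitz:
  fixes f :: "'a::real_normed_vector \<Rightarrow> real"
  assumes "convex_on UNIV f" and "continuous_on UNIV f"
  shows "\<exists>\<rho>>0. \<exists>L. L-lipschitz_on (ball y0 \<rho>) f"
proof -
  obtain r where "r > 0" and r: "\<And>y. dist y y0 < r \<Longrightarrow> \<bar>f y - f y0\<bar> < 1"
    using assms(2) unfolding continuous_on_iff by (metis UNIV_I dist_real_def zero_less_one)
  define \<rho> where "\<rho> = r / 3"
  have "\<rho> > 0" using \<open>r > 0\<close> by (simp add: \<rho>_def)
  have bound: "f p - f q \<le> dist p q / \<rho>" if "p \<in> ball y0 \<rho>" "q \<in> ball y0 \<rho>" for p q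
  proof (cases "p = q")
    case False
    define v where "v = (1 / dist p q) *\<^sub>R (p - q)"
    have pq: "0 < dist p q" "dist p q < 2 * \<rho>"
      using False that dist_triangle3[of p q y0] by (auto simp: dist_commute)
    have p: "p = q + dist p q *\<^sub>R v"
      using pq by (simp add: v_def)
    have "norm v = 1"
      using pq by (simp add: v_def dist_norm)
    then have "dist (q + (2 * \<rho>) *\<^sub>R v) y0 \<le> dist q y0 + 2 * \<rho>"
      using \<open>r > 0\<close> norm_triangle_ineq[of "q - y0" "(2 * \<rho>) *\<^sub>R v"]
      by (simp add: dist_norm \<rho>_def algebra_simps)
    then have "dist (q + (2 * \<rho>) *\<^sub>R v) y0 < r"
      using that by (simp add: \<rho>_def dist_commute)
    moreover have "dist q y0 < r"
      using that \<open>r > 0\<close> by (simp add: \<rho>_def dist_commute)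
    ultimately have "f (q + (2 * \<rho>) *\<^sub>R v) - f q < 2"
      using r[of q] r[of "q + (2 * \<rho>) *\<^sub>R v"] by (simp add: abs_less_iff)
    have "(f p - f q) / dist p q \<le> (f (q + (2 * \<rho>) *\<^sub>R v) - f q) / (2 * \<rho>)"
      using convex_on_diff_quotient_mono[OF assms(1), of "dist p q" "2 * \<rho>" q v] pq p by simp
    also have "\<dots> \<le> 2 / (2 * \<rho>)"
      using \<open>f (q + (2 * \<rho>) *\<^sub>R v) - f q < 2\<close> \<open>\<rho> > 0\<close> by (intro divide_right_mono) auto
    finally show ?thesis
      using pq by (simp add: pos_divide_le_eq mult.commute)
  qed simp
  have "(1 / \<rho>)-lipschitz_on (ball y0 \<rho>) f"
  proof (intro lipschitz_onI)
    fix p q assume "p \<in> ball y0 \<rho>" "q \<in> ball y0 \<rho>"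
    then show "dist (f p) (f q) \<le> 1 / \<rho> * dist p q"
      using bound[of p q] bound[of q p] \<open>\<rho> > 0\<close> by (simp add: dist_real_def abs_le_iff dist_commute)
  qed (use \<open>\<rho> > 0\<close> in simp)
  then show ?thesis
    using \<open>\<rho> > 0\<close> by blast
qed

section \<open>Differentiable maps\<close>

lemma has_derivative_ray_remainder:
  assumes "(g has_derivative A) (at b)"
  shows "((\<lambda>t. norm (g (b + t *\<^sub>R h) - g b - t *\<^sub>R A h) / t) \<longlongrightarrow> 0) (at_right 0)"
proof -
  have lin: "A (t *\<^sub>R h) = t *\<^sub>R A h" for t
    using has_derivative_bounded_linear[OF assms] by (simp add: linear_simps)
  have "(g has_derivative A) (at (b + 0 *\<^sub>R h))"
    using assms by simp
  then have "((\<lambda>t. g (b + t *\<^sub>R h)) has_derivative (\<lambda>t. A (t *\<^sub>R h))) (at 0)"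
    by (rule has_derivative_compose[rotated]) (auto intro!: derivative_eq_intros)
  then have "((\<lambda>t. (g (b + t *\<^sub>R h) - g b - t *\<^sub>R A h) /\<^sub>R norm t) \<longlongrightarrow> 0) (at 0)"
    by (simp add: has_derivative_at_within lin)
  then have "((\<lambda>t. norm ((g (b + t *\<^sub>R h) - g b - t *\<^sub>R A h) /\<^sub>R norm t)) \<longlongrightarrow> 0) (at_right 0)"
    using tendsto_norm_zero tendsto_within_subset by blast
  moreover have "\<forall>\<^sub>F t in at_right 0. norm ((g (b + t *\<^sub>R h) - g b - t *\<^sub>R A h) /\<^sub>R norm t)
      = norm (g (b + t *\<^sub>R h) - g b - t *\<^sub>R A h) / t"
    using eventually_at_right_less[of "0::real"] by eventually_elim (simp add: divide_inverse_commute)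
  ultimately show ?thesis
    by (rule Lim_transform_eventually)
qed

text \<open>Since f is locally Lipschitz, the first-order remainder of g disappears in the limit.\<close>
lemma dir_deriv_comp_tendsto:
  fixes f :: "'b::real_normed_vector \<Rightarrow> real"
  assumes "convex_on UNIV f" and "continuous_on UNIV f" and g: "(g has_derivative A) (at b)"
  shows "((\<lambda>t. (f (g (b + t *\<^sub>R h)) - f (g b)) / t) \<longlongrightarrow> dir_deriv f (g b) (A h)) (at_right 0)"
proof -
  obtain \<rho> L where "\<rho> > 0" and lip: "L-lipschitz_on (ball (g b) \<rho>) f"
    using convex_on_locally_lipschitz[OF assms(1,2)] by blast
  define rem where "rem t = norm (g (b + t *\<^sub>R h) - g b - t *\<^sub>R A h) / t" for t
  have "((\<lambda>t. g (b + t *\<^sub>R h)) \<longlongrightarrow> g (b + 0 *\<^sub>R h)) (at_right 0)"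
    using has_derivative_continuous[OF g]
    by (intro isCont_tendsto_compose[where g=g]) (auto intro!: tendsto_eq_intros)
  then have "\<forall>\<^sub>F t in at_right 0. g (b + t *\<^sub>R h) \<in> ball (g b) \<rho>"
    using \<open>\<rho> > 0\<close> by (auto dest: tendstoD simp: dist_commute)
  moreover have "((\<lambda>t. g b + t *\<^sub>R A h) \<longlongrightarrow> g b + 0 *\<^sub>R A h) (at_right 0)"
    by (intro tendsto_intros)
  then have "\<forall>\<^sub>F t in at_right 0. g b + t *\<^sub>R A h \<in> ball (g b) \<rho>"
    using \<open>\<rho> > 0\<close> by (auto dest: tendstoD simp: dist_commute)
  moreover have "\<forall>\<^sub>F t in at_right 0. 0 < (t::real)"
    by (rule eventually_at_right_less)
  ultimately have "\<forall>\<^sub>F t in at_right 0.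
      norm ((f (g (b + t *\<^sub>R h)) - f (g b)) / t - (f (g b + t *\<^sub>R A h) - f (g b)) / t) \<le> L * rem t"
  proof eventually_elim
    case (elim t)
    then have "\<bar>f (g (b + t *\<^sub>R h)) - f (g b + t *\<^sub>R A h)\<bar> \<le> L * norm (g (b + t *\<^sub>R h) - (g b + t *\<^sub>R A h))"
      using lipschitz_onD[OF lip] by (fastforce simp: dist_real_def dist_norm)
    then show ?case
      using elim by (simp add: rem_def diff_divide_distrib[symmetric] algebra_simps divide_right_mono)
  qed
  moreover have "((\<lambda>t. L * rem t) \<longlongrightarrow> 0) (at_right 0)"
    using tendsto_mult_right_zero[OF has_derivative_ray_remainder[OF g]] by (simp add: rem_def)
  ultimately have "((\<lambda>t. (f (g (b + t *\<^sub>R h)) - f (g b)) / t - (f (g b + t *\<^sub>R A h) - f (g b)) / t) \<longlongrightarrow> 0) (at_right 0)"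
    by (rule Lim_null_comparison)
  from tendsto_add[OF this dir_deriv_tendsto[OF assms(1), of "g b" "A h"]] show ?thesis
    by simp
qed

lemma continuous_derivative_uniform_linearization:
  fixes g :: "'a::real_normed_vector \<Rightarrow> 'b::real_normed_vector"
  assumes g: "\<And>x. (g has_derivative blinfun_apply (g' x)) (at x)"
    and "continuous_on UNIV g'" and "\<eta> > 0"
  shows "\<exists>r>0. \<forall>a\<in>ball x0 r. \<forall>b\<in>ball x0 r. norm (g b - g a - g' a (b - a)) \<le> \<eta> * norm (b - a)"
proof -
  obtain r where "r > 0" and r: "\<And>x. dist x x0 < r \<Longrightarrow> dist (g' x) (g' x0) < \<eta> / 2"
    using assms(2,3) unfolding continuous_on_iff by (metis UNIV_I half_gt_zero)
  have "norm (g b - g a - g' a (b - a)) \<le> \<eta> * norm (b - a)"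
    if a: "a \<in> ball x0 r" and b: "b \<in> ball x0 r" for a b
  proof -
    have "norm (g b - g a - g' a (b - a)) \<le> norm (b - a) * \<eta>"
    proof (rule differentiable_bound_linearization[where S="ball x0 r"])
      show "a + t *\<^sub>R (b - a) \<in> ball x0 r" if "t \<in> {0..1}" for t
        using convexD_alt[OF convex_ball a b, of t] that by (simp add: algebra_simps)
      show "(g has_derivative blinfun_apply (g' x)) (at x within ball x0 r)" for x
        using g by (rule has_derivative_at_withinI)
      show "onorm (blinfun_apply (g' x) - blinfun_apply (g' a)) \<le> \<eta>" if "x \<in> ball x0 r" for x
      proof -
        have "dist (g' x) (g' a) \<le> \<eta>"
          using r[of x] r[of a] that a dist_triangle2[of "g' x" "g' a" "g' x0"] by (simp add: dist_commute)
        moreover have "blinfun_apply (g' x) - blinfun_apply (g' a) = blinfun_apply (g' x - g' a)"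
          by (simp add: fun_eq_iff blinfun.diff_left)
        ultimately show ?thesis
          by (simp add: dist_norm norm_blinfun.rep_eq)
      qed
    qed (use a in auto)
    then show ?thesis by (simp add: mult.commute)
  qed
  with \<open>r > 0\<close> show ?thesis by blast
qed

lemma sublevel_not_interior_imp_eq:
  fixes \<phi> :: "'a::topological_space \<Rightarrow> real"
  assumes "continuous_on UNIV \<phi>" and "\<phi> b \<le> 0" and "b \<notin> interior {x. \<phi> x \<le> 0}"
  shows "\<phi> b = 0"
proof (rule ccontr)
  assume "\<phi> b \<noteq> 0"
  then have "b \<in> {x. \<phi> x < 0}"
    using assms(2) by simp
  moreover have "open {x. \<phi> x < 0}"
    by (intro open_Collect_less assms(1) continuous_on_const)
  moreover have "{x. \<phi> x < 0} \<subseteq> {x. \<phi> x \<le> 0}"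
    by auto
  ultimately have "b \<in> interior {x. \<phi> x \<le> 0}"
    using interior_maximal by blast
  with assms(3) show False ..
qed

lemma frontier_sublevel_imp_eq:
  fixes \<phi> :: "'a::topological_space \<Rightarrow> real"
  assumes "continuous_on UNIV \<phi>" and "b \<in> frontier {x. \<phi> x \<le> 0}"
  shows "\<phi> b = 0"
proof -
  have "closed {x. \<phi> x \<le> 0}"
    by (intro closed_Collect_le assms(1) continuous_on_const)
  then have "\<phi> b \<le> 0" and "b \<notin> interior {x. \<phi> x \<le> 0}"
    using assms(2) by (simp_all add: frontier_def)
  with assms(1) show ?thesis
    by (rule sublevel_not_interior_imp_eq)
qed

section \<open>Bouligand tangent cones and Ekeland's principle\<close>

lemma bouligand_coneI_approx:
  assumes "\<And>\<xi>. \<xi> > 0 \<Longrightarrow> \<exists>t v. 0 < t \<and> t \<le> \<xi> \<and> norm (v - w) \<le> \<xi> \<and> c + t *\<^sub>R v \<in> C"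
  shows "w \<in> bouligand_cone C c"
proof -
  obtain ts vs where tv: "\<And>n. 0 < ts n \<and> ts n \<le> inverse (real (Suc n))
      \<and> norm (vs n - w) \<le> inverse (real (Suc n)) \<and> c + ts n *\<^sub>R vs n \<in> C"
    using assms[of "inverse (real (Suc _))"] by (metis inverse_positive_iff_positive of_nat_0_less_iff zero_less_Suc)
  have "(\<lambda>n. vs n - w) \<longlonglongrightarrow> 0" and "ts \<longlonglongrightarrow> 0"
    using tv by (auto intro!: Lim_null_comparison[OF _ LIMSEQ_inverse_real_of_nat] always_eventually
        simp: less_imp_le)
  then show ?thesis
    unfolding bouligand_cone_def using tv by (blast intro: LIM_zero_cancel)
qed

lemma bouligand_coneI_feasible:
  assumes "e > 0" and "\<And>t. 0 < t \<Longrightarrow> t \<le> e \<Longrightarrow> c + t *\<^sub>R v \<in> C"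
  shows "v \<in> bouligand_cone C c"
proof (rule bouligand_coneI_approx)
  fix \<xi> :: real assume "\<xi> > 0"
  with assms show "\<exists>t u. 0 < t \<and> t \<le> \<xi> \<and> norm (u - v) \<le> \<xi> \<and> c + t *\<^sub>R u \<in> C"
    by (intro exI[of _ "min e \<xi>"] exI[of _ v]) auto
qed

lemma bouligand_cone_convex:
  assumes "convex C" and "c \<in> C" and "s \<in> C" and "l \<ge> 0"
  shows "l *\<^sub>R (s - c) \<in> bouligand_cone C c"
proof (rule bouligand_coneI_feasible)
  show "1 / (l + 1) > 0"
    using assms(4) by simp
  fix t assume "0 < t" "t \<le> 1 / (l + 1)"
  then have "0 \<le> t * l" "t * l \<le> 1"
    using assms(4) by (auto simp: field_simps intro: order_trans[OF mult_left_mono[of l "l + 1"]])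
  then have "(1 - t * l) *\<^sub>R c + (t * l) *\<^sub>R s \<in> C"
    using assms(1-3) by (rule convexD_alt[rotated 3])
  then show "c + t *\<^sub>R l *\<^sub>R (s - c) \<in> C"
    by (simp add: algebra_simps)
qed

lemma bouligand_cone_scaleR:
  assumes "w \<in> bouligand_cone C c" and "l > 0"
  shows "l *\<^sub>R w \<in> bouligand_cone C c"
proof -
  obtain vs ts where "vs \<longlonglongrightarrow> w" "ts \<longlonglongrightarrow> 0" "\<forall>n. ts n > 0" "\<forall>n. c + ts n *\<^sub>R vs n \<in> C"
    using assms(1) unfolding bouligand_cone_def by blast
  moreover have "c + (ts n / l) *\<^sub>R (l *\<^sub>R vs n) = c + ts n *\<^sub>R vs n" for n
    using assms(2) by simp
  ultimately show ?thesis
    unfolding bouligand_cone_def using assms(2)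
    by (intro CollectI exI[of _ "\<lambda>n. l *\<^sub>R vs n"] exI[of _ "\<lambda>n. ts n / l"])
      (auto intro: tendsto_eq_intros)
qed

text \<open>By convexity of the norm, for 0 < t \<le> 1 the inequality at t v implies the one at v,
  so it passes to the limits defining tangent directions.\<close>
lemma bouligand_cone_norm_ineq:
  assumes "\<epsilon> \<ge> 0" and "\<And>s. s \<in> S \<Longrightarrow> norm k - \<epsilon> * norm (s - b) \<le> norm (k - (s - b))"
    and "w \<in> bouligand_cone S b"
  shows "norm k - \<epsilon> * norm w \<le> norm (k - w)"
proof -
  obtain vs ts where vs: "vs \<longlonglongrightarrow> w" and "ts \<longlonglongrightarrow> 0" "\<forall>n. ts n > 0" "\<forall>n. b + ts n *\<^sub>R vs n \<in> S"
    using assms(3) unfolding bouligand_cone_def by blast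
  then have "\<forall>\<^sub>F n in sequentially. 0 < ts n \<and> ts n \<le> 1 \<and> b + ts n *\<^sub>R vs n \<in> S"
    using order_tendstoD(2)[of ts 0 sequentially 1] by (auto elim: eventually_mono)
  then have "\<forall>\<^sub>F n in sequentially. norm k - \<epsilon> * norm (vs n) \<le> norm (k - vs n)"
  proof eventually_elim
    case (elim n)
    define t where "t = ts n"
    have "norm k - \<epsilon> * (t * norm (vs n)) \<le> norm ((1 - t) *\<^sub>R k + t *\<^sub>R (k - vs n))"
      using assms(2)[of "b + t *\<^sub>R vs n"] elim by (simp add: t_def algebra_simps)
    also have "\<dots> \<le> (1 - t) * norm k + t * norm (k - vs n)"
      using elim norm_triangle_ineq[of "(1 - t) *\<^sub>R k" "t *\<^sub>R (k - vs n)"] by (simp add: t_def)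
    finally have "t * (norm k - \<epsilon> * norm (vs n)) \<le> t * norm (k - vs n)"
      by (simp add: algebra_simps)
    then show ?case
      using elim by (simp add: t_def)
  qed
  moreover have "(\<lambda>n. norm (k - vs n)) \<longlonglongrightarrow> norm (k - w)"
    using vs by (intro tendsto_intros)
  moreover have "(\<lambda>n. norm k - \<epsilon> * norm (vs n)) \<longlonglongrightarrow> norm k - \<epsilon> * norm w"
    using vs by (intro tendsto_intros)
  ultimately show ?thesis
    by (intro tendsto_le[OF trivial_limit_sequentially])
qed

definition ekeland_set :: "'a::metric_space set \<Rightarrow> ('a \<Rightarrow> real) \<Rightarrow> real \<Rightarrow> 'a \<Rightarrow> 'a set"
  where "ekeland_set S F \<epsilon> x = {s \<in> S. F s + \<epsilon> * dist s x \<le> F x}"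

lemma ekeland_set_self: "x \<in> S \<Longrightarrow> x \<in> ekeland_set S F \<epsilon> x"
  by (simp add: ekeland_set_def)

lemma ekeland_set_subset: "ekeland_set S F \<epsilon> x \<subseteq> S"
  by (auto simp: ekeland_set_def)

lemma ekeland_set_trans:
  assumes "\<epsilon> \<ge> 0" and "y \<in> ekeland_set S F \<epsilon> x"
  shows "ekeland_set S F \<epsilon> y \<subseteq> ekeland_set S F \<epsilon> x"
proof
  fix s assume "s \<in> ekeland_set S F \<epsilon> y"
  with assms mult_left_mono[OF dist_triangle[of s x y], of \<epsilon>] show "s \<in> ekeland_set S F \<epsilon> x"
    by (auto simp: ekeland_set_def distrib_left)
qed

lemma closed_ekeland_set:
  assumes "closed S" and "continuous_on S F"
  shows "closed (ekeland_set S F \<epsilon> x)"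
  unfolding ekeland_set_def using assms by (intro continuous_on_closed_Collect_le continuous_intros) auto

text \<open>Each step almost minimises F over the current set, which forces the sets to shrink.\<close>
lemma ekeland_nested_sequence:
  assumes "bdd_below (F ` S)" and "s0 \<in> S" and "\<epsilon> \<ge> 0"
  obtains xs where "\<And>n. xs n \<in> ekeland_set S F \<epsilon> s0"
    and "\<And>n. xs (Suc n) \<in> ekeland_set S F \<epsilon> (xs n)"
    and "\<And>n s. s \<in> ekeland_set S F \<epsilon> (xs (Suc n)) \<Longrightarrow> \<epsilon> * dist s (xs (Suc n)) \<le> inverse (real (Suc n))"
proof -
  let ?E = "ekeland_set S F \<epsilon>"
  have bdd: "bdd_below (F ` ?E x)" for x
    using assms(1) ekeland_set_subset by (rule bdd_below_mono[OF _ image_mono])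
  have "\<exists>y. y \<in> ?E s0 \<and> (y \<in> ?E x \<and> F y < Inf (F ` ?E x) + inverse (real (Suc n)))"
    if "x \<in> ?E s0" for x n
  proof -
    have "x \<in> ?E x"
      using that ekeland_set_subset ekeland_set_self by blast
    moreover have "Inf (F ` ?E x) < Inf (F ` ?E x) + inverse (real (Suc n))"
      by simp
    ultimately have "\<exists>z\<in>F ` ?E x. z < Inf (F ` ?E x) + inverse (real (Suc n))"
      using cInf_less_iff[OF _ bdd] by blast
    then obtain y where "y \<in> ?E x" "F y < Inf (F ` ?E x) + inverse (real (Suc n))"
      by blast
    with that ekeland_set_trans[OF assms(3)] show ?thesis by blast
  qed
  then obtain xs where xs: "\<And>n. xs n \<in> ?E s0" "\<And>n. xs (Suc n) \<in> ?E (xs n)"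
    "\<And>n. F (xs (Suc n)) < Inf (F ` ?E (xs n)) + inverse (real (Suc n))"
    using dependent_nat_choice[of "\<lambda>_ x. x \<in> ?E s0"
        "\<lambda>n x y. y \<in> ?E x \<and> F y < Inf (F ` ?E x) + inverse (real (Suc n))"]
      ekeland_set_self[OF assms(2)] by blast
  moreover have "\<epsilon> * dist s (xs (Suc n)) \<le> inverse (real (Suc n))" if "s \<in> ?E (xs (Suc n))" for s n
  proof -
    have "s \<in> ?E (xs n)"
      using that ekeland_set_trans[OF assms(3) xs(2)] by blast
    then have "Inf (F ` ?E (xs n)) \<le> F s"
      using bdd by (rule cInf_lower[OF imageI])
    with that xs(3)[of n] show ?thesis
      by (simp add: ekeland_set_def)
  qed
  ultimately show ?thesis
    using that by blast
qed

lemma ekeland_variational_principle: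
  fixes F :: "'a::complete_space \<Rightarrow> real"
  assumes "closed S" and "continuous_on S F" and "bdd_below (F ` S)" and "s0 \<in> S" and "\<epsilon> > 0"
  shows "\<exists>b\<in>S. F b + \<epsilon> * dist b s0 \<le> F s0 \<and> (\<forall>s\<in>S. F b \<le> F s + \<epsilon> * dist s b)"
proof -
  let ?E = "ekeland_set S F \<epsilon>"
  have "\<epsilon> \<ge> 0"
    using assms(5) by simp
  obtain xs where xs: "\<And>n. xs n \<in> ?E s0" "\<And>n. xs (Suc n) \<in> ?E (xs n)"
    and small: "\<And>n s. s \<in> ?E (xs (Suc n)) \<Longrightarrow> \<epsilon> * dist s (xs (Suc n)) \<le> inverse (real (Suc n))"
    using ekeland_nested_sequence[OF assms(3,4) \<open>\<epsilon> \<ge> 0\<close>] by blast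
  have nested: "?E (xs n) \<subseteq> ?E (xs m)" if "m \<le> n" for m n
    using that
  proof (induction n rule: dec_induct)
    case (step n)
    then show ?case
      using ekeland_set_trans[OF \<open>\<epsilon> \<ge> 0\<close> xs(2)[of n]] by blast
  qed simp
  have "\<exists>n. \<forall>x\<in>?E (xs n). \<forall>y\<in>?E (xs n). dist x y < \<delta>" if "\<delta> > 0" for \<delta>
  proof -
    have "\<forall>\<^sub>F n in sequentially. inverse (real (Suc n)) < \<epsilon> * \<delta> / 2"
      using order_tendstoD(2)[OF LIMSEQ_inverse_real_of_nat, of "\<epsilon> * \<delta> / 2"] that assms(5) by simp
    then obtain n where n: "inverse (real (Suc n)) < \<epsilon> * \<delta> / 2"
      using eventually_happens'[OF sequentially_bot] by blast
    have "dist x y < \<delta>" if "x \<in> ?E (xs (Suc n))" "y \<in> ?E (xs (Suc n))" for x y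
    proof -
      have "\<epsilon> * dist x y \<le> \<epsilon> * dist x (xs (Suc n)) + \<epsilon> * dist y (xs (Suc n))"
        using mult_left_mono[OF dist_triangle2[of x y "xs (Suc n)"] \<open>\<epsilon> \<ge> 0\<close>] by (simp add: distrib_left)
      also have "\<dots> < \<epsilon> * \<delta>"
        using small[OF that(1)] small[OF that(2)] n by linarith
      finally show ?thesis
        using assms(5) by simp
    qed
    then show ?thesis by blast
  qed
  moreover have "?E (xs n) \<noteq> {}" for n
  proof -
    have "xs n \<in> S"
      using xs(1)[of n] ekeland_set_subset by blast
    then show ?thesis
      using ekeland_set_self by blast
  qed
  ultimately obtain b where b: "(\<Inter>n. ?E (xs n)) = {b}"
    using decreasing_closed_nest_sing[of "\<lambda>n. ?E (xs n)", OF closed_ekeland_set[OF assms(1,2)] _ nested]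
    by blast
  then have "b \<in> ?E s0"
    using ekeland_set_trans[OF \<open>\<epsilon> \<ge> 0\<close> xs(1)[of 0]] by blast
  moreover have "F b \<le> F s + \<epsilon> * dist s b" if "s \<in> S" for s
  proof (rule ccontr)
    assume contra: "\<not> ?thesis"
    then have "s \<in> ?E b"
      using that by (simp add: ekeland_set_def)
    then have "s \<in> ?E (xs n)" for n
      using b ekeland_set_trans[OF \<open>\<epsilon> \<ge> 0\<close>, of b S F "xs n"] by blast
    then have "s = b"
      using b by blast
    with contra show False
      by simp
  qed
  ultimately show ?thesis
    unfolding ekeland_set_def by blast
qed

lemma ekeland_dist:
  fixes S :: "'a::complete_space set"
  assumes "closed S" and "s0 \<in> S" and "\<epsilon> > 0"
  obtains b where "b \<in> S" and "dist z b \<le> dist z s0"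
    and "\<And>s. s \<in> S \<Longrightarrow> dist z b - \<epsilon> * dist s b \<le> dist z s"
proof -
  have "continuous_on S (dist z)" and "bdd_below (dist z ` S)"
    by (intro continuous_intros) (auto intro: bdd_belowI[where m=0])
  then obtain b where "b \<in> S" "dist z b + \<epsilon> * dist b s0 \<le> dist z s0"
    and "\<forall>s\<in>S. dist z b \<le> dist z s + \<epsilon> * dist s b"
    using ekeland_variational_principle[OF assms(1) _ _ assms(2,3)] by blast
  moreover have "0 \<le> \<epsilon> * dist b s0"
    using assms(3) by simp
  ultimately show ?thesis
    using that by force
qed

lemma ekeland_point_not_interior:
  fixes S :: "'a::real_normed_vector set"
  assumes "x \<notin> S" and "\<epsilon> < 1" and "\<And>s. s \<in> S \<Longrightarrow> dist x b - \<epsilon> * dist s b \<le> dist x s"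
  shows "b \<notin> interior S"
proof
  assume "b \<in> interior S"
  have "((\<lambda>t. b + t *\<^sub>R (x - b)) \<longlongrightarrow> b + 0 *\<^sub>R (x - b)) (at_right 0)"
    by (intro tendsto_intros)
  then have "\<forall>\<^sub>F t in at_right 0. b + t *\<^sub>R (x - b) \<in> interior S"
    using topological_tendstoD[OF _ open_interior \<open>b \<in> interior S\<close>] by simp
  then have "\<forall>\<^sub>F t in at_right 0. b + t *\<^sub>R (x - b) \<in> S"
    by (rule eventually_mono) (use interior_subset in blast)
  moreover have "\<forall>\<^sub>F t in at_right 0. t \<in> {0<..<(1::real)}"
    by (rule eventually_at_right_real) simp
  ultimately have "\<forall>\<^sub>F t in at_right 0. 0 < t \<and> t < 1 \<and> b + t *\<^sub>R (x - b) \<in> S"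
    by eventually_elim auto
  then obtain t where t: "0 < t" "t < 1" "b + t *\<^sub>R (x - b) \<in> S"
    using eventually_happens'[OF trivial_limit_at_right_real] by blast
  have "x \<noteq> b"
    using t \<open>b \<in> interior S\<close> interior_subset assms(1) by blast
  have "x - (b + t *\<^sub>R (x - b)) = (1 - t) *\<^sub>R (x - b)"
    by (simp add: algebra_simps)
  then have "dist x (b + t *\<^sub>R (x - b)) = (1 - t) * dist x b"
    using t by (simp add: dist_norm)
  moreover have "dist (b + t *\<^sub>R (x - b)) b = t * dist x b"
    using t by (simp add: dist_norm)
  ultimately have "t * dist x b \<le> \<epsilon> * (t * dist x b)"
    using assms(3)[OF t(3)] by (simp add: algebra_simps)
  then show False
    using t assms(2) \<open>x \<noteq> b\<close> by (simp add: mult_le_cancel_right1)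
qed

section \<open>Metric regularity\<close>

lemma metrically_regular_onE:
  assumes "metrically_regular_on g \<kappa> U V" and "x \<in> U" and "y \<in> V" and "e > 0"
  obtains x' where "g x' = y" and "dist x x' < \<kappa> * norm (g x - y) + e"
proof -
  have le: "setdist_e x (g -` {y}) \<le> ereal (\<kappa> * norm (g x - y))"
    using assms(1-3) by (auto simp: metrically_regular_on_def)
  have ne: "g -` {y} \<noteq> {}"
  proof
    assume "g -` {y} = {}"
    with le show False
      by (simp add: setdist_e_def)
  qed
  obtain x' where "x' \<in> g -` {y}" "dist x x' < infdist x (g -` {y}) + e"
    using ex_dist_less_infdist_add[OF ne assms(4)] by blast
  moreover have "infdist x (g -` {y}) \<le> \<kappa> * norm (g x - y)"
    using le ne by simp
  ultimately show ?thesis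
    by (intro that[of x']) auto
qed

lemma metrically_regular_on_ray_correction:
  assumes "metrically_regular_on g \<kappa> U V" and "b + t *\<^sub>R w \<in> U" and "g b + t *\<^sub>R v \<in> V"
    and "t > 0" and "e > 0"
  obtains w' where "g (b + t *\<^sub>R w') = g b + t *\<^sub>R v"
    and "norm (w' - w) < \<kappa> * norm (g (b + t *\<^sub>R w) - (g b + t *\<^sub>R v)) / t + e"
proof -
  obtain x' where x': "g x' = g b + t *\<^sub>R v"
    and "dist (b + t *\<^sub>R w) x' < \<kappa> * norm (g (b + t *\<^sub>R w) - (g b + t *\<^sub>R v)) + t * e"
    by (rule metrically_regular_onE[OF assms(1-3), of "t * e"]) (use assms(4,5) in simp)
  then have "norm (x' - (b + t *\<^sub>R w)) / t < (\<kappa> * norm (g (b + t *\<^sub>R w) - (g b + t *\<^sub>R v)) + t * e) / t"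
    using assms(4) by (intro divide_strict_right_mono) (simp_all add: dist_norm norm_minus_commute)
  moreover have "(1 / t) *\<^sub>R (x' - b) - w = (1 / t) *\<^sub>R (x' - (b + t *\<^sub>R w))"
    using assms(4) by (simp add: algebra_simps)
  ultimately have "norm ((1 / t) *\<^sub>R (x' - b) - w) < \<kappa> * norm (g (b + t *\<^sub>R w) - (g b + t *\<^sub>R v)) / t + e"
    using assms(4) by (simp add: add_divide_distrib)
  moreover have "g (b + t *\<^sub>R ((1 / t) *\<^sub>R (x' - b))) = g b + t *\<^sub>R v"
    using assms(4) x' by simp
  ultimately show ?thesis
    using that by blast
qed

text \<open>The approximate solution is a rescaled preimage of g x + s r for small s > 0.\<close>
lemma metrically_regular_on_derivative_approx:
  assumes MR: "metrically_regular_on g \<kappa> U V" and "\<kappa> \<ge> 0" and "open V" and "x \<in> U" and "g x \<in> V"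
    and g: "(g has_derivative A) (at x)"
  shows "\<exists>u. norm u \<le> (\<kappa> + 1) * norm r \<and> norm (A u - r) \<le> norm r / 2"
proof (cases "r = 0")
  case True
  have "A 0 = 0"
    using has_derivative_bounded_linear[OF g] by (simp add: linear_simps)
  with True show ?thesis by auto
next
  case False
  define \<eta> where "\<eta> = 1 / (2 * (\<kappa> + 1))"
  have "\<eta> > 0" and \<eta>: "\<eta> * (\<kappa> + 1) = 1 / 2"
    using \<open>\<kappa> \<ge> 0\<close> by (auto simp: \<eta>_def)
  obtain d where "d > 0" and d: "\<And>z. norm (z - x) < d \<Longrightarrow> norm (g z - g x - A (z - x)) \<le> \<eta> * norm (z - x)"
    using g \<open>\<eta> > 0\<close> unfolding has_derivative_at_alt by blast
  have "((\<lambda>s. g x + s *\<^sub>R r) \<longlongrightarrow> g x + 0 *\<^sub>R r) (at_right 0)"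
    by (intro tendsto_intros)
  then have "\<forall>\<^sub>F s in at_right 0. g x + s *\<^sub>R r \<in> V"
    using topological_tendstoD[OF _ \<open>open V\<close>] \<open>g x \<in> V\<close> by simp
  moreover have "\<forall>\<^sub>F s in at_right 0. s \<in> {0<..<d / ((\<kappa> + 1) * norm r)}"
    using \<open>d > 0\<close> \<open>\<kappa> \<ge> 0\<close> False by (intro eventually_at_right_real) simp
  ultimately have "\<forall>\<^sub>F s in at_right 0. g x + s *\<^sub>R r \<in> V \<and> s \<in> {0<..<d / ((\<kappa> + 1) * norm r)}"
    by eventually_elim simp
  then obtain s where "g x + s *\<^sub>R r \<in> V" and "s \<in> {0<..<d / ((\<kappa> + 1) * norm r)}"
    using eventually_happens'[OF trivial_limit_at_right_real] by blast
  moreover have "x + s *\<^sub>R 0 \<in> U"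
    using \<open>x \<in> U\<close> by simp
  ultimately obtain u where gu: "g (x + s *\<^sub>R u) = g x + s *\<^sub>R r"
    and "norm (u - 0) < \<kappa> * norm (g (x + s *\<^sub>R 0) - (g x + s *\<^sub>R r)) / s + norm r"
    using metrically_regular_on_ray_correction[OF MR, of x s 0 r "norm r"] False by auto
  moreover have s: "0 < s" "(\<kappa> + 1) * norm r * s < d"
    using \<open>s \<in> _\<close> \<open>\<kappa> \<ge> 0\<close> False by (auto simp: pos_less_divide_eq mult_ac)
  ultimately have nu: "norm u \<le> (\<kappa> + 1) * norm r"
    by (simp add: algebra_simps)
  have "s * norm u \<le> (\<kappa> + 1) * norm r * s"
    using mult_left_mono[OF nu, of s] s(1) by (simp add: mult_ac)
  moreover have "norm (s *\<^sub>R u) = s * norm u"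
    using s(1) by simp
  ultimately have "norm (s *\<^sub>R u) < d"
    using s(2) by linarith
  have "A (s *\<^sub>R u) = s *\<^sub>R A u"
    using has_derivative_bounded_linear[OF g] by (simp add: linear_simps)
  then have "s *\<^sub>R (A u - r) = - (g (x + s *\<^sub>R u) - g x - A (s *\<^sub>R u))"
    by (simp add: gu scaleR_diff_right)
  then have "s * norm (A u - r) \<le> \<eta> * (s * norm u)"
    using d[of "x + s *\<^sub>R u"] \<open>norm (s *\<^sub>R u) < d\<close> s(1) by (metis add_diff_cancel_left' norm_minus_cancel
        norm_scaleR abs_of_pos)
  then have "norm (A u - r) \<le> \<eta> * norm u"
    using s(1) by (simp add: mult.left_commute)
  also have "\<dots> \<le> \<eta> * ((\<kappa> + 1) * norm r)"
    using nu \<open>\<eta> > 0\<close> by (intro mult_left_mono) auto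
  finally have "norm (A u - r) \<le> \<eta> * ((\<kappa> + 1) * norm r)" .
  with nu show ?thesis
    by (auto simp: \<eta> mult.assoc[symmetric])
qed

text \<open>Iterating approximate solutions, the residuals decay geometrically and the corrections
  sum to an exact solution.\<close>
lemma blinfun_solvable_of_approx_solvable:
  fixes A :: "'a::banach \<Rightarrow>\<^sub>L 'b::real_normed_vector"
  assumes "K \<ge> 0"
    and approx: "\<And>r. \<exists>u. norm u \<le> K * norm r \<and> norm (A u - r) \<le> norm r / 2"
  shows "\<exists>u. norm u \<le> 2 * K * norm r \<and> A u = r"
proof -
  have "\<exists>P. \<forall>r. norm (P r) \<le> K * norm r \<and> norm (A (P r) - r) \<le> norm r / 2"
    using approx by (intro choice) blast
  then obtain P where P: "\<And>r. norm (P r) \<le> K * norm r" "\<And>r. norm (A (P r) - r) \<le> norm r / 2"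
    by blast
  define e where "e = rec_nat r (\<lambda>_ x. x - A (P x))"
  have e0: "e 0 = r" and eS: "e (Suc n) = e n - A (P (e n))" for n
    by (simp_all add: e_def)
  define u where "u n = P (e n)" for n
  have enorm: "norm (e n) \<le> norm r * (1 / 2) ^ n" for n
  proof (induction n)
    case (Suc n)
    have "norm (e (Suc n)) \<le> norm (e n) / 2"
      using P(2)[of "e n"] by (simp add: eS norm_minus_commute)
    with Suc show ?case by simp
  qed (simp add: e0)
  have unorm: "norm (u n) \<le> K * norm r * (1 / 2) ^ n" for n
    using P(1)[of "e n"] mult_left_mono[OF enorm[of n] \<open>K \<ge> 0\<close>] by (simp add: u_def mult.assoc)
  have geom: "(\<lambda>n. K * norm r * (1 / 2 :: real) ^ n) sums (K * norm r * 2)"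
    using sums_mult[OF geometric_sums[of "1 / 2 :: real"]] by simp
  have su: "summable (\<lambda>n. norm (u n))"
    using unorm by (intro summable_comparison_test'[OF sums_summable[OF geom]]) simp
  have "norm (suminf u) \<le> (\<Sum>n. norm (u n))"
    using su by (rule summable_norm)
  also have "\<dots> \<le> (\<Sum>n. K * norm r * (1 / 2) ^ n)"
    using unorm su sums_summable[OF geom] by (rule suminf_le)
  also have "\<dots> = K * norm r * 2"
    using geom by (rule sums_unique[symmetric])
  finally have norm_sum: "norm (suminf u) \<le> K * norm r * 2" .
  have "e \<longlonglongrightarrow> 0"
    using enorm by (intro Lim_null_comparison[OF always_eventually, OF _ tendsto_mult_right_zero[OF LIMSEQ_power_zero]]) auto
  then have "(\<lambda>n. A (u n)) sums r"
    using telescope_sums'[of e 0] by (simp add: eS e0 u_def)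
  moreover have "A (suminf u) = (\<Sum>n. A (u n))"
    by (rule bounded_linear.suminf[OF blinfun.bounded_linear_right summable_norm_cancel[OF su]])
  ultimately have "A (suminf u) = r"
    by (simp add: sums_iff)
  with norm_sum show ?thesis
    by (intro exI[of _ "suminf u"]) (simp add: mult_ac)
qed

lemma metrically_regular_on_derivative_onto:
  fixes A :: "'a::banach \<Rightarrow>\<^sub>L 'b::real_normed_vector"
  assumes "metrically_regular_on g \<kappa> U V" and "\<kappa> \<ge> 0" and "open V" and "x \<in> U" and "g x \<in> V"
    and "(g has_derivative blinfun_apply A) (at x)"
  shows "\<exists>u. norm u \<le> 2 * (\<kappa> + 1) * norm r \<and> A u = r"
  using blinfun_solvable_of_approx_solvable[of "\<kappa> + 1" A r]
    metrically_regular_on_derivative_approx[OF assms] assms(2)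
  by (simp add: mult.assoc)

lemma tangent_sequence_residual:
  assumes g: "(g has_derivative A) (at b)" and "vs \<longlonglongrightarrow> A w" and "ts \<longlonglongrightarrow> 0" and "\<forall>n. ts n > 0"
  shows "(\<lambda>n. norm (g (b + ts n *\<^sub>R w) - (g b + ts n *\<^sub>R vs n)) / ts n) \<longlonglongrightarrow> 0"
proof -
  define rem where "rem t = norm (g (b + t *\<^sub>R w) - g b - t *\<^sub>R A w) / t" for t
  have "\<forall>n. ts n \<in> {0<..} \<and> ts n \<noteq> 0"
    using assms(4) by (simp add: less_imp_neq[symmetric])
  with assms(3) have "filterlim ts (at_right 0) sequentially"
    by (simp add: filterlim_at always_eventually)
  moreover have "(\<lambda>n. A w - vs n) \<longlonglongrightarrow> 0"
    using tendsto_diff[OF tendsto_const assms(2), of "A w"] by simp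
  ultimately have lim: "(\<lambda>n. rem (ts n) + norm (A w - vs n)) \<longlonglongrightarrow> 0 + 0"
    unfolding rem_def
    by (intro tendsto_intros filterlim_compose[OF has_derivative_ray_remainder[OF g]] tendsto_norm_zero)
  have bound: "norm (g (b + t *\<^sub>R w) - (g b + t *\<^sub>R v)) / t \<le> rem t + norm (A w - v)" if "t > 0" for t v
  proof -
    have eq: "g (b + t *\<^sub>R w) - (g b + t *\<^sub>R v) = (g (b + t *\<^sub>R w) - g b - t *\<^sub>R A w) + t *\<^sub>R (A w - v)"
      by (simp add: algebra_simps)
    have "norm (g (b + t *\<^sub>R w) - (g b + t *\<^sub>R v))
        \<le> norm (g (b + t *\<^sub>R w) - g b - t *\<^sub>R A w) + norm (t *\<^sub>R (A w - v))"
      unfolding eq by (rule norm_triangle_ineq)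
    then have "norm (g (b + t *\<^sub>R w) - (g b + t *\<^sub>R v)) / t
        \<le> (norm (g (b + t *\<^sub>R w) - g b - t *\<^sub>R A w) + t * norm (A w - v)) / t"
      using that by (intro divide_right_mono) auto
    then show ?thesis
      using that by (simp add: rem_def add_divide_distrib)
  qed
  have "\<forall>n. norm (norm (g (b + ts n *\<^sub>R w) - (g b + ts n *\<^sub>R vs n)) / ts n) \<le> rem (ts n) + norm (A w - vs n)"
    using bound assms(4) by (simp add: less_imp_le)
  from Lim_null_comparison[OF always_eventually[OF this]] lim show ?thesis
    by simp
qed

text \<open>A Lyusternik-type argument: metric regularity moves the points b + t w onto the
  preimage of T at a cost that is small compared with t.\<close>
lemma bouligand_cone_vimage:
  assumes MR: "metrically_regular_on g \<kappa> U V" and "open U" and "open V"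
    and "b \<in> U" and "g b \<in> V" and g: "(g has_derivative A) (at b)"
    and "A w \<in> bouligand_cone T (g b)"
  shows "w \<in> bouligand_cone (g -` T) b"
proof (rule bouligand_coneI_approx)
  fix \<xi> :: real assume "\<xi> > 0"
  obtain vs ts where vs: "vs \<longlonglongrightarrow> A w" and ts: "ts \<longlonglongrightarrow> 0" "\<forall>n. ts n > 0"
    and T: "\<forall>n. g b + ts n *\<^sub>R vs n \<in> T"
    using assms(7) unfolding bouligand_cone_def by blast
  define res where "res n = norm (g (b + ts n *\<^sub>R w) - (g b + ts n *\<^sub>R vs n)) / ts n" for n
  have "(\<lambda>n. \<kappa> * res n) \<longlonglongrightarrow> 0"
    unfolding res_def by (rule tendsto_mult_right_zero[OF tangent_sequence_residual[OF g vs ts]])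
  then have "\<forall>\<^sub>F n in sequentially. \<kappa> * res n < \<xi> / 2"
    using \<open>\<xi> > 0\<close> by (intro order_tendstoD(2)) auto
  moreover have "\<forall>\<^sub>F n in sequentially. b + ts n *\<^sub>R w \<in> U"
    using topological_tendstoD[OF _ \<open>open U\<close>, of "\<lambda>n. b + ts n *\<^sub>R w"] \<open>b \<in> U\<close>
      tendsto_add[OF tendsto_const tendsto_scaleR[OF ts(1) tendsto_const], of b w] by simp
  moreover have "\<forall>\<^sub>F n in sequentially. g b + ts n *\<^sub>R vs n \<in> V"
    using topological_tendstoD[OF _ \<open>open V\<close>, of "\<lambda>n. g b + ts n *\<^sub>R vs n"] \<open>g b \<in> V\<close>
      tendsto_add[OF tendsto_const tendsto_scaleR[OF ts(1) vs], of "g b"] by simp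
  moreover have "\<forall>\<^sub>F n in sequentially. ts n < \<xi>"
    using order_tendstoD(2)[OF ts(1) \<open>\<xi> > 0\<close>] .
  ultimately have "\<forall>\<^sub>F n in sequentially. ts n < \<xi> \<and> b + ts n *\<^sub>R w \<in> U \<and> g b + ts n *\<^sub>R vs n \<in> V
      \<and> \<kappa> * res n < \<xi> / 2"
    by eventually_elim blast
  then obtain n where n: "ts n < \<xi>" "b + ts n *\<^sub>R w \<in> U" "g b + ts n *\<^sub>R vs n \<in> V" "\<kappa> * res n < \<xi> / 2"
    using eventually_happens'[OF sequentially_bot] by blast
  obtain w' where "g (b + ts n *\<^sub>R w') = g b + ts n *\<^sub>R vs n" and "norm (w' - w) < \<kappa> * res n + \<xi> / 2"
    using metrically_regular_on_ray_correction[OF MR n(2,3) _ half_gt_zero[OF \<open>\<xi> > 0\<close>]] ts(2)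
    by (auto simp: res_def)
  with n(1,4) ts(2) T show "\<exists>t v. 0 < t \<and> t \<le> \<xi> \<and> norm (v - w) \<le> \<xi> \<and> b + t *\<^sub>R v \<in> g -` T"
    by (intro exI[of _ "ts n"] exI[of _ w']) auto
qed

section \<open>The two inequalities\<close>

text \<open>By convexity (q - p) / t is tangent to C at p, and a preimage under A of the defect
  corrects (s - b) / t into the linearised cone.\<close>
lemma infdist_linearized_cone_le:
  fixes A :: "'a::real_normed_vector \<Rightarrow>\<^sub>L 'b::real_normed_vector"
  assumes "convex C" and "p \<in> C" and "q \<in> C" and "t > 0" and "K \<ge> 0" and "e \<ge> 0"
    and onto: "\<And>r. \<exists>u. norm u \<le> K * norm r \<and> A u = r"
    and near: "dist (b + t *\<^sub>R h) s \<le> t * a"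
    and lin: "norm (q - p - A (s - b)) \<le> e * norm (s - b)"
  shows "infdist h {h. A h \<in> bouligand_cone C p} \<le> a + K * e * (norm h + a)"
proof -
  define D where "D = {h. A h \<in> bouligand_cone C p}"
  define k where "k = (1 / t) *\<^sub>R (s - b)"
  have res: "(1 / t) *\<^sub>R (q - p) - A k = (1 / t) *\<^sub>R (q - p - A (s - b))"
    unfolding k_def blinfun.scaleR_right by (simp add: scaleR_diff_right)
  obtain u where u: "norm u \<le> K * norm ((1 / t) *\<^sub>R (q - p) - A k)" "A u = (1 / t) *\<^sub>R (q - p) - A k"
    using onto by blast
  have "A (k + u) \<in> bouligand_cone C p"
    using bouligand_cone_convex[OF assms(1-3), of "1 / t"] \<open>t > 0\<close> u(2) by (simp add: blinfun.add_right)
  then have "infdist k D \<le> norm u"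
    using infdist_le[of "k + u" D k] by (simp add: D_def dist_norm)
  have "s - b = (s - (b + t *\<^sub>R h)) + t *\<^sub>R h"
    by simp
  then have ns: "norm (s - b) \<le> t * (norm h + a)"
    using norm_triangle_ineq[of "s - (b + t *\<^sub>R h)" "t *\<^sub>R h"] near \<open>t > 0\<close>
    by (simp add: dist_norm norm_minus_commute distrib_left)
  then have "norm (q - p - A (s - b)) \<le> t * (e * (norm h + a))"
    using order_trans[OF lin mult_left_mono[OF ns \<open>e \<ge> 0\<close>]] by (simp add: mult.left_commute)
  then have "norm (q - p - A (s - b)) / t \<le> e * (norm h + a)"
    using \<open>t > 0\<close> by (simp add: pos_divide_le_eq mult.commute)
  then have "infdist k D \<le> K * e * (norm h + a)"
    using \<open>infdist k D \<le> norm u\<close> u(1) \<open>t > 0\<close> \<open>K \<ge> 0\<close> mult_left_mono[of _ _ K]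
    by (fastforce simp: res mult.assoc)
  moreover have "dist h k \<le> a"
  proof -
    have "h - k = (1 / t) *\<^sub>R ((b + t *\<^sub>R h) - s)"
      using \<open>t > 0\<close> by (simp add: k_def algebra_simps)
    then show ?thesis
      using near \<open>t > 0\<close> by (simp add: dist_norm pos_divide_le_eq mult.commute)
  qed
  ultimately show ?thesis
    using infdist_triangle[of h D k] by (simp add: D_def)
qed

lemma ray_point_of_dir_deriv_less:
  fixes f :: "'b::real_normed_vector \<Rightarrow> real"
  assumes "convex_on UNIV f" and "continuous_on UNIV f" and "(g has_derivative A) (at b)"
    and "dir_deriv f (g b) (A h) < a" and "open N" and "b \<in> N" and "c > 0"
  obtains t where "0 < t" and "t < c" and "f (g (b + t *\<^sub>R h)) < f (g b) + t * a"
    and "b + t *\<^sub>R h \<in> N"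
proof -
  have "\<forall>\<^sub>F t in at_right 0. (f (g (b + t *\<^sub>R h)) - f (g b)) / t < a"
    using dir_deriv_comp_tendsto[OF assms(1-3), of h] assms(4) by (rule order_tendstoD(2))
  moreover have "((\<lambda>t. b + t *\<^sub>R h) \<longlongrightarrow> b + 0 *\<^sub>R h) (at_right 0)"
    by (intro tendsto_intros)
  then have "\<forall>\<^sub>F t in at_right 0. b + t *\<^sub>R h \<in> N"
    using topological_tendstoD[OF _ \<open>open N\<close>] \<open>b \<in> N\<close> by simp
  moreover have "\<forall>\<^sub>F t in at_right 0. t \<in> {0<..<c}"
    using \<open>c > 0\<close> by (rule eventually_at_right_real)
  ultimately have "\<forall>\<^sub>F t in at_right 0. (f (g (b + t *\<^sub>R h)) - f (g b)) / t < a \<and> b + t *\<^sub>R h \<in> N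
      \<and> t \<in> {0<..<c}"
    by eventually_elim blast
  then obtain t where "(f (g (b + t *\<^sub>R h)) - f (g b)) / t < a" "b + t *\<^sub>R h \<in> N" "t \<in> {0<..<c}"
    using eventually_happens'[OF trivial_limit_at_right_real] by blast
  with that show ?thesis
    by (auto simp: pos_divide_less_eq mult.commute)
qed

text \<open>Along b + t h the function f \<circ> g grows at most like t (1 + o(1)), so the error bound
  provides feasible points within about \<tau> t of b + t h; their difference quotients are moved into
  the linearised tangent cone by the open mapping property of A.\<close>
lemma error_bound_imp_infdist_tangent_le:
  fixes g :: "'a::real_normed_vector \<Rightarrow> 'b::real_normed_vector" and A :: "'a \<Rightarrow>\<^sub>L 'b"
    and f :: "'b \<Rightarrow> real"
  assumes "convex_on UNIV f" and "continuous_on UNIV f"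
    and g: "(g has_derivative blinfun_apply A) (at b)" and "f (g b) = 0"
    and "open N" and "b \<in> N" and "\<tau> \<ge> 0"
    and EB: "\<And>x. x \<in> N \<Longrightarrow> setdist_e x {z. f (g z) \<le> 0} \<le> ereal (\<tau> * max (f (g x)) 0)"
    and onto: "\<And>r. \<exists>u. norm u \<le> K * norm r \<and> A u = r" and "K \<ge> 0"
    and h: "dir_deriv f (g b) (A h) \<le> 1"
  shows "infdist h {h. A h \<in> bouligand_cone {y. f y \<le> 0} (g b)} \<le> \<tau>"
proof -
  define S where "S = {z. f (g z) \<le> 0}"
  define bound where "bound e = (\<tau> * (1 + e) + e) + K * e * (norm h + (\<tau> * (1 + e) + e))" for e
  have "infdist h {h. A h \<in> bouligand_cone {y. f y \<le> 0} (g b)} \<le> bound e" if "e > 0" for e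
  proof -
    define a where "a = \<tau> * (1 + e) + e"
    have "a \<ge> 0"
      using \<open>e > 0\<close> \<open>\<tau> \<ge> 0\<close> by (simp add: a_def)
    obtain d where "d > 0" and d: "\<And>z. norm (z - b) < d \<Longrightarrow> norm (g z - g b - A (z - b)) \<le> e * norm (z - b)"
      using g \<open>e > 0\<close> unfolding has_derivative_at_alt by blast
    have "0 < norm h + a + 1"
      using \<open>a \<ge> 0\<close> norm_ge_zero[of h] by linarith
    obtain t where "0 < t" "t < d / (norm h + a + 1)"
      "f (g (b + t *\<^sub>R h)) < f (g b) + t * (1 + e)" "b + t *\<^sub>R h \<in> N"
    proof (rule ray_point_of_dir_deriv_less[where c="d / (norm h + a + 1)", OF assms(1,2) g _ \<open>open N\<close> \<open>b \<in> N\<close>])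
      show "dir_deriv f (g b) (A h) < 1 + e"
        using h \<open>e > 0\<close> by simp
    qed (use \<open>d > 0\<close> \<open>0 < norm h + a + 1\<close> in simp)
    then have t: "0 < t" "f (g (b + t *\<^sub>R h)) < t * (1 + e)" "b + t *\<^sub>R h \<in> N"
      "t * (norm h + a + 1) < d"
      using \<open>0 < norm h + a + 1\<close> \<open>f (g b) = 0\<close> by (simp_all add: pos_less_divide_eq)
    have "b \<in> S"
      using \<open>f (g b) = 0\<close> by (simp add: S_def)
    then have "S \<noteq> {}"
      by blast
    then have "infdist (b + t *\<^sub>R h) S \<le> \<tau> * max (f (g (b + t *\<^sub>R h))) 0"
      using EB[OF t(3)] unfolding S_def by simp
    also have "\<dots> \<le> \<tau> * (t * (1 + e))"
      using t(1,2) \<open>e > 0\<close> \<open>\<tau> \<ge> 0\<close> by (intro mult_left_mono) auto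
    finally obtain s where "s \<in> S" and s: "dist (b + t *\<^sub>R h) s \<le> t * a"
      using ex_dist_less_infdist_add[of S "t * e" "b + t *\<^sub>R h"] \<open>b \<in> S\<close> t(1) \<open>e > 0\<close>
      by (fastforce simp: a_def algebra_simps)
    moreover have "norm (s - b) < d"
    proof -
      have "norm (s - b) \<le> dist (b + t *\<^sub>R h) s + t * norm h"
        using norm_triangle_ineq[of "s - (b + t *\<^sub>R h)" "t *\<^sub>R h"] t(1)
        by (simp add: dist_norm norm_minus_commute)
      moreover have "dist (b + t *\<^sub>R h) s + t * norm h \<le> t * (norm h + a + 1)"
        using s t(1) by (simp add: algebra_simps)
      ultimately show ?thesis
        using t(4) by linarith
    qed
    moreover have "g b \<in> {y. f y \<le> 0}" "g s \<in> {y. f y \<le> 0}"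
      using \<open>f (g b) = 0\<close> \<open>s \<in> S\<close> by (simp_all add: S_def)
    ultimately show ?thesis
      unfolding bound_def a_def[symmetric] using d \<open>e > 0\<close>
      by (intro infdist_linearized_cone_le[where p="g b" and q="g s", OF convex_sublevel[OF assms(1)] _ _ t(1) \<open>K \<ge> 0\<close> _ onto]) auto
  qed
  moreover have "(bound \<longlongrightarrow> bound 0) (at_right 0)"
    unfolding bound_def by (intro tendsto_intros)
  ultimately show ?thesis
    using eventually_at_right_less[of "0::real"]
    by (intro tendsto_le[OF trivial_limit_at_right_real _ tendsto_const]) (auto simp: bound_def elim: eventually_mono)
qed

text \<open>Ekeland's slack \<epsilon> and the linearisation error \<eta> can be chosen so small that
  \<tau>' is absorbed into any larger \<tau>.\<close>
lemma error_bound_constants: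
  fixes \<tau> \<tau>' L :: real
  assumes "0 < \<tau>'" and "\<tau>' < \<tau>" and "L \<ge> 0"
  obtains \<epsilon> \<eta> where "0 < \<epsilon>" and "\<epsilon> < 1" and "0 < \<eta>"
    and "\<And>n \<phi>. 0 < \<phi> \<Longrightarrow> (1 - \<epsilon>) * n < (1 + \<epsilon>) * \<tau>' * (\<phi> + L * \<eta> * n) \<Longrightarrow> n < \<tau> * \<phi>"
proof
  define \<epsilon> where "\<epsilon> = (\<tau> - \<tau>') / (8 * \<tau>)"
  define \<eta> where "\<eta> = \<epsilon> / ((1 + \<epsilon>) * \<tau>' * (L + 1))"
  have "\<tau> > 0"
    using assms by simp
  then have "0 < \<epsilon>" "\<epsilon> < 1 / 8" and \<tau>\<epsilon>: "\<tau> * \<epsilon> = (\<tau> - \<tau>') / 8"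
    using assms by (auto simp: \<epsilon>_def field_simps)
  then show "0 < \<epsilon>" "\<epsilon> < 1" "0 < \<eta>"
    using assms by (auto simp: \<eta>_def)
  define c where "c = (1 + \<epsilon>) * \<tau>' * L * \<eta>"
  have cancel: "P * L * (\<epsilon> / (P * (L + 1))) = \<epsilon> * (L / (L + 1))" if "P \<noteq> 0" for P
  proof -
    have "P * L * (\<epsilon> / (P * (L + 1))) = (P * (L * \<epsilon>)) / (P * (L + 1))"
      by (simp add: mult_ac)
    also have "\<dots> = (L * \<epsilon>) / (L + 1)"
      using that by (rule mult_divide_mult_cancel_left)
    finally show ?thesis
      by (simp add: mult.commute)
  qed
  have "c = \<epsilon> * (L / (L + 1))"
    unfolding c_def \<eta>_def using \<open>0 < \<epsilon>\<close> assms(1) by (intro cancel) simp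
  moreover have "L / (L + 1) \<le> 1"
    using assms(3) by simp
  ultimately have "0 \<le> c" "c \<le> \<epsilon>"
    using \<open>0 < \<epsilon>\<close> assms(3) mult_left_mono[of "L / (L + 1)" 1 \<epsilon>] by auto
  have "\<tau>' * \<epsilon> \<le> \<tau> * \<epsilon>"
    using assms \<open>0 < \<epsilon>\<close> by simp
  moreover have "\<tau> * c \<le> \<tau> * \<epsilon>" and "0 < \<tau> * \<epsilon>"
    using \<open>c \<le> \<epsilon>\<close> \<open>\<tau> > 0\<close> \<open>0 < \<epsilon>\<close> by simp_all
  ultimately have "\<tau>' + \<tau>' * \<epsilon> \<le> \<tau> - \<tau> * \<epsilon> - \<tau> * c"
    using \<tau>\<epsilon> assms(2) by (simp add: field_simps)
  then have key: "(1 + \<epsilon>) * \<tau>' \<le> \<tau> * (1 - \<epsilon> - c)"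
    by (simp add: algebra_simps)
  fix n \<phi> :: real
  assume "0 < \<phi>" and "(1 - \<epsilon>) * n < (1 + \<epsilon>) * \<tau>' * (\<phi> + L * \<eta> * n)"
  then have "(1 - \<epsilon> - c) * n < (1 + \<epsilon>) * \<tau>' * \<phi>"
    by (simp add: c_def algebra_simps)
  also have "\<dots> \<le> (1 - \<epsilon> - c) * (\<tau> * \<phi>)"
    using mult_right_mono[OF key, of \<phi>] \<open>0 < \<phi>\<close> by (simp add: mult_ac)
  finally show "n < \<tau> * \<phi>"
    using \<open>c \<le> \<epsilon>\<close> \<open>\<epsilon> < 1 / 8\<close> by (simp add: mult_less_cancel_left)
qed

text \<open>The direction k / c is admissible, hence \<tau>'-close to some w with A w tangent; Ekeland's
  inequality for the tangent direction c w then bounds k.\<close>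
lemma ekeland_point_norm_bound:
  fixes A :: "'a::real_normed_vector \<Rightarrow>\<^sub>L 'b::real_normed_vector" and f :: "'b \<Rightarrow> real"
  assumes "convex_on UNIV f" and "f y = 0" and "\<epsilon> \<ge> 0"
    and ek: "\<And>s. s \<in> S \<Longrightarrow> norm k - \<epsilon> * norm (s - b) \<le> norm (k - (s - b))"
    and cone: "\<And>w. A w \<in> bouligand_cone {y. f y \<le> 0} y \<Longrightarrow> w \<in> bouligand_cone S b"
    and bnd: "\<And>h. dir_deriv f y (A h) \<le> 1 \<Longrightarrow> infdist h {h. A h \<in> bouligand_cone {y. f y \<le> 0} y} < \<tau>'"
    and "f (y + A k) \<le> c" and "0 < c"
  shows "(1 - \<epsilon>) * norm k < (1 + \<epsilon>) * \<tau>' * c"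
proof -
  define D where "D = {h. A h \<in> bouligand_cone {y. f y \<le> 0} y}"
  define h where "h = (1 / c) *\<^sub>R k"
  have "dir_deriv f y (A h) = (1 / c) * dir_deriv f y (A k)"
    using dir_deriv_scaleR[OF assms(1), of "1 / c" y "A k"] \<open>0 < c\<close> by (simp add: h_def blinfun.scaleR_right)
  also have "\<dots> \<le> (1 / c) * c"
    using dir_deriv_le_diff_quotient[OF assms(1), of 1 y "A k"] assms(2,7,8) by (intro mult_left_mono) auto
  finally have "infdist h D < \<tau>'"
    using bnd \<open>0 < c\<close> by (simp add: D_def)
  moreover have "convex {y. f y \<le> 0}"
    using assms(1) by (rule convex_sublevel)
  then have "0 \<in> D"
    using bouligand_cone_convex[of "{y. f y \<le> 0}" y y 0] assms(2) by (simp add: D_def)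
  ultimately obtain w where "w \<in> D" and hw: "dist h w < \<tau>'"
    using ex_dist_less_infdist_add[of D "\<tau>' - infdist h D" h] by auto
  then have "c *\<^sub>R w \<in> bouligand_cone S b"
    using cone bouligand_cone_scaleR[of "A w" _ y c] \<open>0 < c\<close> by (simp add: D_def blinfun.scaleR_right)
  then have "norm k - \<epsilon> * norm (c *\<^sub>R w) \<le> norm (k - c *\<^sub>R w)"
    using bouligand_cone_norm_ineq[OF \<open>\<epsilon> \<ge> 0\<close> ek] by blast
  moreover have "norm (k - c *\<^sub>R w) < c * \<tau>'"
  proof -
    have "k - c *\<^sub>R w = c *\<^sub>R (h - w)"
      using \<open>0 < c\<close> by (simp add: h_def algebra_simps)
    then show ?thesis
      using hw \<open>0 < c\<close> by (simp add: dist_norm)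
  qed
  moreover have "\<epsilon> * norm (c *\<^sub>R w) \<le> \<epsilon> * (norm k + c * \<tau>')"
    using norm_triangle_ineq4[of k "k - c *\<^sub>R w"] \<open>norm (k - c *\<^sub>R w) < c * \<tau>'\<close> \<open>\<epsilon> \<ge> 0\<close>
    by (intro mult_left_mono) auto
  ultimately show ?thesis
    by (simp add: algebra_simps)
qed

lemma lipschitz_on_ball_le:
  assumes "L-lipschitz_on (ball y0 \<rho>) f" and "dist y0 q < \<rho> / 2" and "dist p q \<le> \<delta>" and "\<delta> < \<rho> / 2"
  shows "f p \<le> f q + L * \<delta>"
proof -
  have "dist y0 p < \<rho>" "dist y0 q < \<rho>"
    using dist_triangle[of y0 p q] dist_commute[of q p] zero_le_dist[of y0 q] assms(2-4) by linarith+
  then have "dist (f p) (f q) \<le> L * dist p q"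
    using assms(1) by (intro lipschitz_onD) auto
  also have "\<dots> \<le> L * \<delta>"
    using assms(3) lipschitz_on_nonneg[OF assms(1)] by (rule mult_left_mono)
  finally show ?thesis
    by (simp add: dist_real_def abs_diff_le_iff)
qed

locale convex_composite =
  fixes g :: "'a::banach \<Rightarrow> 'b::banach" and g' :: "'a \<Rightarrow> ('a \<Rightarrow>\<^sub>L 'b)" and f :: "'b \<Rightarrow> real"
  assumes g_deriv: "\<And>x. (g has_derivative blinfun_apply (g' x)) (at x)"
    and g'_cont: "continuous_on UNIV g'"
    and f_convex: "convex_on UNIV f"
    and f_cont: "continuous_on UNIV f"
begin

abbreviation tangent_excess :: "'a \<Rightarrow> ereal"
  where "tangent_excess \<equiv> \<lambda>x. excess {h. dir_deriv f (g x) (g' x h) \<le> 1}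
                                     {h. g' x h \<in> bouligand_cone {y. f y \<le> 0} (g x)}"

lemma continuous_on_g: "continuous_on UNIV g"
  using g_deriv has_derivative_continuous by (blast intro: continuous_at_imp_continuous_on)

lemma continuous_on_comp: "continuous_on UNIV (\<lambda>x. f (g x))"
  using continuous_on_compose[OF continuous_on_g continuous_on_subset[OF f_cont]] by (simp add: o_def)

lemma closed_feasible: "closed {x. f (g x) \<le> 0}"
  by (intro closed_Collect_le continuous_on_comp continuous_on_const)

lemma tangent_excess_sets_nonempty:
  shows "0 \<in> {h. dir_deriv f (g x) (g' x h) \<le> 1}"
    and "f (g x) \<le> 0 \<Longrightarrow> 0 \<in> {h. g' x h \<in> bouligand_cone {y. f y \<le> 0} (g x)}"
  using bouligand_cone_convex[of "{y. f y \<le> 0}" "g x" "g x" 0] convex_sublevel[OF f_convex]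
  by auto

end

locale convex_composite_regular = convex_composite g g' f
  for g :: "'a::banach \<Rightarrow> 'b::banach" and g' f +
  fixes xbar :: 'a and \<kappa> :: real and U :: "'a set" and V :: "'b set"
  assumes xbar_feasible: "f (g xbar) \<le> 0"
    and regular: "metrically_regular_on g \<kappa> U V" and kappa_pos: "\<kappa> > 0"
    and open_U: "open U" and xbar_in_U: "xbar \<in> U" and open_V: "open V" and g_xbar_in_V: "g xbar \<in> V"
begin

lemma limsup_tangent_excess_le:
  assumes "error_bound_with (\<lambda>x. f (g x)) xbar \<tau>"
  shows "limsup_within (frontier {x. f (g x) \<le> 0}) xbar tangent_excess \<le> ereal \<tau>"
proof -
  obtain \<delta> where "\<tau> > 0" and "\<delta> > 0"
    and EB: "\<And>x. x \<in> ball xbar \<delta> \<Longrightarrow> setdist_e x {z. f (g z) \<le> 0} \<le> ereal (\<tau> * max (f (g x)) 0)"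
    using assms unfolding error_bound_with_def by blast
  have "open (ball xbar \<delta> \<inter> U \<inter> g -` V)"
    using open_U open_V continuous_on_g by (intro open_Int open_vimage) auto
  moreover have "xbar \<in> ball xbar \<delta> \<inter> U \<inter> g -` V"
    using \<open>\<delta> > 0\<close> xbar_in_U g_xbar_in_V by simp
  ultimately obtain r where "r > 0" and r: "ball xbar r \<subseteq> ball xbar \<delta> \<inter> U \<inter> g -` V"
    by (meson open_contains_ball)
  have "tangent_excess b \<le> ereal \<tau>" if b: "b \<in> frontier {x. f (g x) \<le> 0} \<inter> ball xbar r" for b
  proof -
    have "f (g b) = 0"
      using frontier_sublevel_imp_eq[OF continuous_on_comp] b by blast
    moreover have "b \<in> U" "g b \<in> V" "b \<in> ball xbar \<delta>"
      using b r by auto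
    ultimately have bound: "infdist h {h. g' b h \<in> bouligand_cone {y. f y \<le> 0} (g b)} \<le> \<tau>"
      if "h \<in> {h. dir_deriv f (g b) (g' b h) \<le> 1}" for h
      using that kappa_pos \<open>\<tau> > 0\<close>
      by (intro error_bound_imp_infdist_tangent_le[OF f_convex f_cont g_deriv _ open_ball _ _ EB
            metrically_regular_on_derivative_onto[OF regular _ open_V _ _ g_deriv]]) auto
    have "0 \<in> {h. g' b h \<in> bouligand_cone {y. f y \<le> 0} (g b)}"
      using tangent_excess_sets_nonempty(2)[of b] \<open>f (g b) = 0\<close> by simp
    then show ?thesis
      using tangent_excess_sets_nonempty(1)[of b] by (intro excess_le[OF _ _ bound]) (auto intro: exI[of _ 0])
  qed
  with \<open>r > 0\<close> \<open>\<tau> > 0\<close> show ?thesis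
    by (intro limsup_within_le) auto
qed

lemma ekeland_point_dist_less:
  assumes "0 < f (g x)" and "f (g b) \<le> 0" and "0 \<le> \<epsilon>" and "\<epsilon> < 1"
    and ek: "\<And>s. f (g s) \<le> 0 \<Longrightarrow> dist x b - \<epsilon> * dist s b \<le> dist x s"
    and "b \<in> U" and "g b \<in> V"
    and bnd: "\<And>h. b \<in> frontier {z. f (g z) \<le> 0} \<Longrightarrow> dir_deriv f (g b) (g' b h) \<le> 1 \<Longrightarrow>
      infdist h {h. g' b h \<in> bouligand_cone {y. f y \<le> 0} (g b)} < \<tau>'"
    and lip: "f (g b + g' b (x - b)) \<le> f (g x) + L * \<eta> * dist x b" and "L * \<eta> \<ge> 0"
    and constants: "\<And>n \<phi>. 0 < \<phi> \<Longrightarrow> (1 - \<epsilon>) * n < (1 + \<epsilon>) * \<tau>' * (\<phi> + L * \<eta> * n) \<Longrightarrow> n < \<tau> * \<phi>"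
  shows "dist x b < \<tau> * f (g x)"
proof -
  define S where "S = {z. f (g z) \<le> 0}"
  have ek': "norm (x - b) - \<epsilon> * norm (s - b) \<le> norm ((x - b) - (s - b))" if "s \<in> S" for s
    using ek[of s] that by (simp add: S_def dist_norm)
  have "b \<notin> interior S"
    using ekeland_point_not_interior[of x S \<epsilon> b] ek assms(1,4) by (auto simp: S_def)
  then have "f (g b) = 0"
    using sublevel_not_interior_imp_eq[OF continuous_on_comp] assms(2) by (simp add: S_def)
  have "b \<in> frontier S"
    using \<open>b \<notin> interior S\<close> assms(2) closed_feasible by (simp add: S_def frontier_def)
  have cone: "w \<in> bouligand_cone S b" if "g' b w \<in> bouligand_cone {y. f y \<le> 0} (g b)" for w
    using bouligand_cone_vimage[OF regular open_U open_V \<open>b \<in> U\<close> \<open>g b \<in> V\<close> g_deriv that]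
    by (simp add: S_def)
  have "0 < f (g x) + L * \<eta> * dist x b"
    using assms(1) mult_nonneg_nonneg[OF \<open>L * \<eta> \<ge> 0\<close> zero_le_dist[of x b]] by linarith
  with ekeland_point_norm_bound[OF f_convex \<open>f (g b) = 0\<close> \<open>0 \<le> \<epsilon>\<close> ek' cone bnd[OF \<open>b \<in> frontier S\<close>[unfolded S_def]] lip]
  have "(1 - \<epsilon>) * dist x b < (1 + \<epsilon>) * \<tau>' * (f (g x) + L * \<eta> * dist x b)"
    by (simp add: dist_norm)
  then show ?thesis
    using constants assms(1) by blast
qed

text \<open>An infeasible x near xbar is compared with its Ekeland point b in the feasible set,
  which is a boundary point near xbar.\<close>
lemma error_bound_with_of_infdist_tangent_less:
  assumes "0 < \<tau>'" and "\<tau>' < \<tau>" and "\<delta>' > 0"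
    and bnd: "\<And>b h. b \<in> frontier {z. f (g z) \<le> 0} \<Longrightarrow> b \<in> ball xbar \<delta>' \<Longrightarrow>
      dir_deriv f (g b) (g' b h) \<le> 1 \<Longrightarrow> infdist h {h. g' b h \<in> bouligand_cone {y. f y \<le> 0} (g b)} < \<tau>'"
  shows "error_bound_with (\<lambda>x. f (g x)) xbar \<tau>"
proof -
  define S where "S = {z. f (g z) \<le> 0}"
  obtain \<rho> L where "\<rho> > 0" and lip: "L-lipschitz_on (ball (g xbar) \<rho>) f"
    using convex_on_locally_lipschitz[OF f_convex f_cont] by blast
  then have "L \<ge> 0"
    using lipschitz_on_nonneg by blast
  obtain \<epsilon> \<eta> where "0 < \<epsilon>" "\<epsilon> < 1" "0 < \<eta>"
    and constants: "\<And>n \<phi>. 0 < \<phi> \<Longrightarrow> (1 - \<epsilon>) * n < (1 + \<epsilon>) * \<tau>' * (\<phi> + L * \<eta> * n) \<Longrightarrow> n < \<tau> * \<phi>"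
    using error_bound_constants[OF assms(1,2) \<open>L \<ge> 0\<close>] by blast
  obtain rg where "rg > 0"
    and lin: "\<forall>a\<in>ball xbar rg. \<forall>b\<in>ball xbar rg. norm (g b - g a - g' a (b - a)) \<le> \<eta> * norm (b - a)"
    using continuous_derivative_uniform_linearization[OF g_deriv g'_cont \<open>0 < \<eta>\<close>] by blast
  define W where "W = U \<inter> g -` V \<inter> ball xbar (min \<delta>' rg) \<inter> g -` ball (g xbar) (\<rho> / 2) \<inter> ball xbar (\<rho> / (2 * \<eta>))"
  have "open W"
    unfolding W_def using open_U open_V continuous_on_g by (intro open_Int open_vimage open_ball) auto
  moreover have "xbar \<in> W"
    using xbar_in_U g_xbar_in_V \<open>\<delta>' > 0\<close> \<open>rg > 0\<close> \<open>\<rho> > 0\<close> \<open>0 < \<eta>\<close> by (simp add: W_def)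
  ultimately obtain R where "R > 0" and R: "ball xbar R \<subseteq> W"
    by (meson open_contains_ball)
  have "setdist_e x S \<le> ereal (\<tau> * max (f (g x)) 0)" if x: "x \<in> ball xbar (R / 2)" for x
  proof (cases "f (g x) \<le> 0")
    case True
    then have "x \<in> S"
      by (simp add: S_def)
    with True show ?thesis
      by (subst setdist_e_eq_infdist) auto
  next
    case False
    obtain b where "b \<in> S" and bx: "dist x b \<le> dist x xbar"
      and ek: "\<And>s. s \<in> S \<Longrightarrow> dist x b - \<epsilon> * dist s b \<le> dist x s"
      using ekeland_dist[OF closed_feasible _ \<open>0 < \<epsilon>\<close>, of xbar x] xbar_feasible by (auto simp: S_def)
    have "dist xbar b \<le> dist xbar x + dist x b"
      by (rule dist_triangle)
    then have "x \<in> ball xbar R" "b \<in> ball xbar R"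
      using x bx \<open>R > 0\<close> by (auto simp: dist_commute)
    then have "x \<in> W" "b \<in> W"
      using R by auto
    have "dist (g b + g' b (x - b)) (g x) \<le> \<eta> * dist x b"
      using lin \<open>x \<in> W\<close> \<open>b \<in> W\<close> by (simp add: W_def dist_norm norm_minus_commute algebra_simps)
    moreover have "\<eta> * dist x b < \<rho> / 2"
    proof -
      have "dist x xbar < \<rho> / (2 * \<eta>)"
        using \<open>x \<in> W\<close> by (simp add: W_def dist_commute)
      then have "\<eta> * dist x xbar < \<rho> / 2"
        using \<open>0 < \<eta>\<close> by (simp add: field_simps)
      moreover have "\<eta> * dist x b \<le> \<eta> * dist x xbar"
        using bx \<open>0 < \<eta>\<close> by simp
      ultimately show ?thesis
        by linarith
    qed
    moreover have "dist (g xbar) (g x) < \<rho> / 2"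
      using \<open>x \<in> W\<close> by (simp add: W_def)
    ultimately have "f (g b + g' b (x - b)) \<le> f (g x) + L * (\<eta> * dist x b)"
      by (intro lipschitz_on_ball_le[OF lip])
    then have "dist x b < \<tau> * f (g x)"
      using False \<open>b \<in> S\<close> ek \<open>b \<in> W\<close> \<open>0 < \<epsilon>\<close> \<open>\<epsilon> < 1\<close> \<open>L \<ge> 0\<close> \<open>0 < \<eta>\<close>
      by (intro ekeland_point_dist_less[where \<tau>'=\<tau>' and L=L and \<eta>=\<eta>] bnd constants)
        (auto simp: S_def W_def mult.assoc)
    moreover have "setdist_e x S = ereal (infdist x S)"
      using \<open>b \<in> S\<close> by (intro setdist_e_eq_infdist) blast
    ultimately show ?thesis
      using infdist_le[OF \<open>b \<in> S\<close>, of x] False by simp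
  qed
  then show ?thesis
    using \<open>R > 0\<close> \<open>\<tau>' < \<tau>\<close> \<open>0 < \<tau>'\<close> unfolding error_bound_with_def S_def
    by (intro conjI exI[of _ "R / 2"]) auto
qed

lemma error_bound_with_of_limsup_tangent_excess_less:
  assumes "limsup_within (frontier {x. f (g x) \<le> 0}) xbar tangent_excess < ereal \<tau>"
  shows "error_bound_with (\<lambda>x. f (g x)) xbar \<tau>"
proof -
  have nonneg: "0 \<le> limsup_within (frontier {x. f (g x) \<le> 0}) xbar tangent_excess"
    by (intro limsup_within_nonneg excess_nonneg)
  obtain z where less: "limsup_within (frontier {x. f (g x) \<le> 0}) xbar tangent_excess < z"
    and "z < ereal \<tau>"
    using dense[OF assms] by blast
  moreover have "0 < z"
    using nonneg less by (rule le_less_trans)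
  ultimately obtain \<tau>' where "z = ereal \<tau>'" "0 < \<tau>'" "\<tau>' < \<tau>"
    by (cases z) auto
  with less obtain \<delta>' where "\<delta>' > 0"
    and \<delta>': "\<And>b. b \<in> frontier {x. f (g x) \<le> 0} \<inter> ball xbar \<delta>' \<Longrightarrow> tangent_excess b < ereal \<tau>'"
    using limsup_within_less_imp_eventually_less by blast
  show ?thesis
  proof (rule error_bound_with_of_infdist_tangent_less[OF \<open>0 < \<tau>'\<close> \<open>\<tau>' < \<tau>\<close> \<open>\<delta>' > 0\<close>])
    fix b h
    assume b: "b \<in> frontier {z. f (g z) \<le> 0}" "b \<in> ball xbar \<delta>'"
      and h: "dir_deriv f (g b) (g' b h) \<le> 1"
    have "f (g b) = 0"
      using frontier_sublevel_imp_eq[OF continuous_on_comp b(1)] .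
    then have "ereal (infdist h {h. g' b h \<in> bouligand_cone {y. f y \<le> 0} (g b)}) \<le> tangent_excess b"
      using h tangent_excess_sets_nonempty(2)[of b]
      by (intro infdist_le_excess) (auto intro: exI[of _ 0])
    also have "\<dots> < ereal \<tau>'"
      using \<delta>' b by blast
    finally show "infdist h {h. g' b h \<in> bouligand_cone {y. f y \<le> 0} (g b)} < \<tau>'"
      by simp
  qed
qed

end

theorem theorem4p5:
  fixes g :: "'a::banach \<Rightarrow> 'b::banach"
    and g' :: "'a \<Rightarrow> ('a \<Rightarrow>\<^sub>L 'b)"
    and f :: "'b \<Rightarrow> real"
    and xbar :: 'a
  assumes g_deriv: "\<And>x. (g has_derivative blinfun_apply (g' x)) (at x)"
    and g'_cont: "continuous_on UNIV g'"
    and f_convex: "convex_on UNIV f"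
    and f_cont: "continuous_on UNIV f"
    and xbar_in: "xbar \<in> {x. f (g x) \<le> 0}"
    and reg: "metrically_regular g xbar"
  shows "(local_error_bound (\<lambda>x. f (g x)) xbar \<longleftrightarrow>
            limsup_within (frontier {x. f (g x) \<le> 0}) xbar
              (\<lambda>x. excess {h. dir_deriv f (g x) (g' x h) \<le> 1}
                           {h. g' x h \<in> bouligand_cone {y. f y \<le> 0} (g x)}) < \<infinity>)
       \<and> error_bound_modulus (\<lambda>x. f (g x)) xbar =
            limsup_within (frontier {x. f (g x) \<le> 0}) xbar
              (\<lambda>x. excess {h. dir_deriv f (g x) (g' x h) \<le> 1}
                           {h. g' x h \<in> bouligand_cone {y. f y \<le> 0} (g x)})"
proof -
  obtain \<kappa> U V where "metrically_regular_on g \<kappa> U V" "\<kappa> > 0"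
    "open U" "xbar \<in> U" "open V" "g xbar \<in> V"
    using reg unfolding metrically_regular_iff by blast
  with assms interpret convex_composite_regular g g' f xbar \<kappa> U V
    by unfold_locales auto
  show ?thesis
    using Inf_admissible_eq[OF limsup_tangent_excess_le error_bound_with_of_limsup_tangent_excess_less]
    by (simp add: local_error_bound_iff_error_bound_with error_bound_modulus_eq_Inf_error_bound_with)
qed

end
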